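(* Assume the setting of the context and let $N\in\mathbb{N}$ and $\Delta t=T/M>0$. Then the ABEP scheme satisfies, for every $p\ge2$, \[ \mathbb{E}\Big[\sup_{t\in[0,T]}|\hat{\xi}^{\mathrm{ABEP}}_{N,\Delta t}(t)|^p\Big]\le\begin{cases}C(p,T,L_f,L_g,a,x_0),&\text{if } b=\infty,\\ \max(|a|^p,|b|^p),&\text{if } b<\infty,\end{cases} \] with a constant independent of $N$ and $\Delta t$, and it only takes values in $\operatorname{cl}D_N$: $\mathbb{P}(\hat{\xi}^{\mathrm{ABEP}}_{N,\Delta t}(t)\in\operatorname{cl}D_N\ \forall t\in[0,T])=1$.
   Context: Let $T\in(0,\infty)$, let $(\Omega,\mathcal{F},\mathbb{P},(\mathcal{F}_t)_{t\ge0})$ be a filtered probability space satisfying the usual conditions, and let $B$ be a standard Brownian motion on it. Let $a\in\mathbb{R}$, $b\in\mathbb{R}\cup\{\infty\}$ with $a<b$, and $D=(a,b)$; if $b<\infty$ assume $b-a>2$. For $N\in\mathbb{N}$ let $D_N=(a+1/N,\infty)$ if $b=\infty$ and $D_N=(a+1/N,b-1/N)$ if $b<\infty$. Let $f,g:\mathbb{R}\to\mathbb{R}$ be such that their restrictions to $D$ are Lipschitz continuous with Lipschitz constants $L_f,L_g$. Let $x_0\in D_1$. Let $X$ be the (unique strong) solution of $X(t)=x_0+\int_0^t f(X(s))\,ds+\int_0^t g(X(s))\,dB(s)$, $t\in[0,T]$, and assume the boundary points are unattainable: $\mathbb{P}(X(t)\in D\ \forall t\in[0,T])=1$. Artificial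 Barriers Euler–Peano (ABEP) scheme: for $M\in\mathbb{N}$ let $\Delta t=T/M$, $t_k=k\Delta t$, and $\ell_{\Delta t}(s)=t_k$ for $s\in[t_k,t_{k+1})$. $\hat{\xi}^{\mathrm{ABEP}}_{N,\Delta t}$ is the continuous adapted process which, together with continuous adapted non-decreasing processes $\hat U,\hat L$ with $\hat U(0)=\hat L(0)=0$, satisfies: $\hat{\xi}^{\mathrm{ABEP}}_{N,\Delta t}(t)\in\operatorname{cl}D_N$ for all $t$; $\hat U$ increases only when $\hat{\xi}^{\mathrm{ABEP}}_{N,\Delta t}=b-1/N$ ($\hat U\equiv0$ if $b=\infty$) and $\hat L$ only when $\hat{\xi}^{\mathrm{ABEP}}_{N,\Delta t}=a+1/N$; and for all $t\in[0,T]$, $\hat{\xi}^{\mathrm{ABEP}}_{N,\Delta t}(t)=x_0+\int_0^t f(\hat{\xi}^{\mathrm{ABEP}}_{N,\Delta t}(\ell_{\Delta t}(s)))\,ds+\int_0^t g(\hat{\xi}^{\mathrm{ABEP}}_{N,\Delta t}(\ell_{\Delta t}(s)))\,dB(s)-\hat U(t)+\hat L(t)$ (i.e. Euler–Maruyama increments on each step, reflected at the boundary of $\operatorname{cl}D_N$). Constants $C(\cdot)$ depend only on the listed parameters. *)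

theory Defs
  imports "HOL-Probability.Probability"
begin

definition Dom :: "real \<Rightarrow> ereal \<Rightarrow> real set" where
  "Dom a b = {x. a < x \<and> ereal x < b}"

definition DN :: "nat \<Rightarrow> real \<Rightarrow> ereal \<Rightarrow> real set" where
  "DN N a b = {x. a + 1 / real N < x \<and> ereal x < b - ereal (1 / real N)}"

definition usual_filtration :: "'w measure \<Rightarrow> (real \<Rightarrow> 'w measure) \<Rightarrow> bool" where
  "usual_filtration P F \<longleftrightarrow>
     prob_space P \<and>
     (\<forall>t\<ge>0. subalgebra P (F t)) \<and>
     (\<forall>s t. 0 \<le> s \<and> s \<le> t \<longrightarrow> sets (F s) \<subseteq> sets (F t)) \<and>
     (\<forall>t\<ge>0. sets (F t) = (\<Inter>s\<in>{t<..}. sets (F s))) \<and>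
     (\<forall>A\<in>null_sets P. \<forall>B. B \<subseteq> A \<longrightarrow> B \<in> sets (F 0))"

definition brownian_motion :: "'w measure \<Rightarrow> (real \<Rightarrow> 'w measure) \<Rightarrow> (real \<Rightarrow> 'w \<Rightarrow> real) \<Rightarrow> bool" where
  "brownian_motion P F B \<longleftrightarrow>
     usual_filtration P F \<and>
     (\<forall>t\<ge>0. B t \<in> borel_measurable (F t)) \<and>
     (\<forall>\<omega>\<in>space P. B 0 \<omega> = 0 \<and> continuous_on {0..} (\<lambda>t. B t \<omega>)) \<and>
     (\<forall>s t. 0 \<le> s \<and> s < t \<longrightarrow>
        distributed P lborel (\<lambda>\<omega>. B t \<omega> - B s \<omega>) (normal_density 0 (sqrt (t - s))) \<and>
        prob_space.indep_set P (sets (F s))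
          (sets (vimage_algebra (space P) (\<lambda>\<omega>. B t \<omega> - B s \<omega>) borel)))"

definition ell :: "real \<Rightarrow> nat \<Rightarrow> real \<Rightarrow> real" where
  "ell T M s = (T / real M) * of_int \<lfloor>s / (T / real M)\<rfloor>"

text \<open>Ito integral over [0,t] of the elementary (piecewise constant on the grid)
  integrand h(t_k) on [t_k, t_{k+1}) against B.\<close>

definition elem_ito :: "real \<Rightarrow> nat \<Rightarrow> (real \<Rightarrow> real) \<Rightarrow> (real \<Rightarrow> real) \<Rightarrow> real \<Rightarrow> real" where
  "elem_ito T M h Bpath t =
     (\<Sum>k<M. h (real k * (T / real M)) *
        (Bpath (min t (real (Suc k) * (T / real M))) - Bpath (min t (real k * (T / real M)))))"

text \<open>The ABEP scheme: xi with reflection processes U (upper barrier b-1/N)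
  and L (lower barrier a+1/N).\<close>

definition ABEP :: "'w measure \<Rightarrow> (real \<Rightarrow> 'w measure) \<Rightarrow> (real \<Rightarrow> 'w \<Rightarrow> real)
    \<Rightarrow> (real \<Rightarrow> real) \<Rightarrow> (real \<Rightarrow> real) \<Rightarrow> real \<Rightarrow> nat \<Rightarrow> nat \<Rightarrow> real \<Rightarrow> ereal \<Rightarrow> real
    \<Rightarrow> (real \<Rightarrow> 'w \<Rightarrow> real) \<Rightarrow> (real \<Rightarrow> 'w \<Rightarrow> real) \<Rightarrow> (real \<Rightarrow> 'w \<Rightarrow> real) \<Rightarrow> bool" where
  "ABEP P F B f g T M N a b x0 \<xi> U L \<longleftrightarrow>
     (\<forall>t\<in>{0..T}. \<xi> t \<in> borel_measurable (F t) \<and> U t \<in> borel_measurable (F t)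
                   \<and> L t \<in> borel_measurable (F t)) \<and>
     (\<forall>\<omega>\<in>space P.
        continuous_on {0..T} (\<lambda>t. \<xi> t \<omega>) \<and>
        continuous_on {0..T} (\<lambda>t. U t \<omega>) \<and> continuous_on {0..T} (\<lambda>t. L t \<omega>) \<and>
        mono_on {0..T} (\<lambda>t. U t \<omega>) \<and> mono_on {0..T} (\<lambda>t. L t \<omega>) \<and>
        U 0 \<omega> = 0 \<and> L 0 \<omega> = 0 \<and>
        (\<forall>t\<in>{0..T}. \<xi> t \<omega> \<in> closure (DN N a b)) \<and>
        (b = \<infinity> \<longrightarrow> (\<forall>t\<in>{0..T}. U t \<omega> = 0)) \<and>
        (b \<noteq> \<infinity> \<longrightarrow> (\<forall>s t. 0 \<le> s \<and> s \<le> t \<and> t \<le> T \<and> U s \<omega> < U t \<omega> \<longrightarrow>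
             (\<exists>r\<in>{s..t}. \<xi> r \<omega> = real_of_ereal b - 1 / real N))) \<and>
        (\<forall>s t. 0 \<le> s \<and> s \<le> t \<and> t \<le> T \<and> L s \<omega> < L t \<omega> \<longrightarrow>
             (\<exists>r\<in>{s..t}. \<xi> r \<omega> = a + 1 / real N)) \<and>
        (\<forall>t\<in>{0..T}. \<xi> t \<omega> =
            x0 + integral {0..t} (\<lambda>s. f (\<xi> (ell T M s) \<omega>))
               + elem_ito T M (\<lambda>s. g (\<xi> s \<omega>)) (\<lambda>s. B s \<omega>) t
               - U t \<omega> + L t \<omega>))"

end

theory Submission
  imports Defs
begin

text \<open>For finite \<open>b\<close> the scheme is confined to \<open>cl D\<^sub>N \<subseteq> [a, b]\<close> and the bound is immediate.
  For \<open>b = \<infinity>\<close> only the lower barrier acts, and the one-sided Skorokhod problem gives the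
  pathwise estimate \<open>|\<xi>(t)| \<le> |a| + 1 + |x\<^sub>0| + 2 sup\<^sub>s\<^sub>\<le>\<^sub>t |drift(s) + Ito(s)|\<close>.
  The drift is an Euler sum of \<open>f\<close> at grid points. The Ito part is a discrete martingale
  transform of \<open>B\<close>: a binomial expansion against the Gaussian moments of independent increments
  makes its \<open>2r\<close>-th moment grow at most geometrically, and Doob's inequality for the
  submartingale \<open>|Ito|\<^sup>r\<close>, proved pathwise on dyadic refinements of the grid and passed to
  the continuum by monotone convergence, controls its supremum. Linear growth of \<open>f\<close> and \<open>g\<close>
  then closes a discrete Gronwall inequality for \<open>E \<xi>(t\<^sub>k)\<^sup>2\<^sup>r\<close> that is uniform in \<open>N\<close> and \<open>\<Delta>t\<close>,
  and \<open>|x|\<^sup>p \<le> 1 + x\<^sup>2\<^sup>r\<close> for \<open>p \<le> 2r\<close>.\<close>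

lemma mult_power_le_power_add:
  fixes x y :: real
  assumes "0 \<le> x" "0 \<le> y" "j \<le> n"
  shows "x^(n-j) * y^j \<le> x^n + y^n"
proof (cases "x \<le> y")
  case True
  have "x^(n-j) * y^j \<le> y^(n-j) * y^j"
    using assms True by (intro mult_right_mono power_mono) auto
  also have "\<dots> = y^n" using assms(3) by (simp add: power_add[symmetric])
  finally show ?thesis using zero_le_power[OF assms(1), of n] by linarith
next
  case False
  have "x^(n-j) * y^j \<le> x^(n-j) * x^j"
    using assms False by (intro mult_left_mono power_mono) auto
  also have "\<dots> = x^n" using assms(3) by (simp add: power_add[symmetric])
  finally show ?thesis using zero_le_power[OF assms(2), of n] by linarith
qed

lemma power_add_le_two_power:
  fixes u v :: real
  assumes "0 \<le> u" "0 \<le> v"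
  shows "(u+v)^n \<le> 2^n * (u^n+v^n)"
proof -
  have "(u+v)^n \<le> (2 * max u v)^n" using assms by (intro power_mono) auto
  also have "\<dots> = 2^n * (max u v)^n" by (simp add: power_mult_distrib)
  also have "(max u v)^n \<le> u^n+v^n"
    using assms by (auto simp: max_def zero_le_power)
  then have "2^n * (max u v)^n \<le> 2^n * (u^n+v^n)" by simp
  finally show ?thesis .
qed

lemma power_add3_le_three_power:
  fixes u v w :: real
  assumes "0 \<le> u" "0 \<le> v" "0 \<le> w"
  shows "(u+v+w)^n \<le> 3^n * (u^n+v^n+w^n)"
proof -
  let ?m = "max u (max v w)"
  have "(u+v+w)^n \<le> (3 * ?m)^n" using assms by (intro power_mono) auto
  also have "\<dots> = 3^n * ?m^n" by (simp add: power_mult_distrib)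
  also have "?m^n \<le> u^n+v^n+w^n"
    using assms by (auto simp: max_def zero_le_power)
  then have "3^n * ?m^n \<le> 3^n * (u^n+v^n+w^n)" by simp
  finally show ?thesis .
qed

lemma sum_even_power_le:
  fixes a :: "nat \<Rightarrow> real"
  assumes "even q" "q \<ge> 1"
  shows "(\<Sum>k<n. a k)^q \<le> real n^(q-1) * (\<Sum>k<n. (a k)^q)"
proof (cases "n = 0")
  case True then show ?thesis using assms by (simp add: zero_power)
next
  case False
  have "((\<Sum>k<n. (1/real n) *\<^sub>R (a k)))^q \<le> (\<Sum>k<n. (1/real n) * (a k)^q)"
    using False by (intro convex_on_sum[OF _ _ convex_power_even[OF assms(1)]]) auto
  then have mean: "((\<Sum>k<n. a k) / real n)^q \<le> (\<Sum>k<n. (a k)^q) / real n"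
    by (simp add: sum_divide_distrib)
  have n_pos: "real n > 0" using False by simp
  have "(\<Sum>k<n. a k)^q = real n^q * ((\<Sum>k<n. a k) / real n)^q"
    using n_pos by (simp add: power_divide)
  also have "\<dots> \<le> real n^q * ((\<Sum>k<n. (a k)^q) / real n)"
    using mean n_pos by (intro mult_left_mono) auto
  also have "\<dots> = real n^(q-1) * (\<Sum>k<n. (a k)^q)"
    using n_pos assms(2) by (cases q) auto
  finally show ?thesis .
qed

lemma power_abs_two_mult: "\<bar>x::real\<bar>^(2*r) = x^(2*r)"
  by (simp add: power_even_abs)

lemma abs_power_square: "(\<bar>x::real\<bar>^r)^2 = x^(2*r)"
  by (simp add: power_mult[symmetric] power_even_abs mult.commute)

lemma mult_le_square_add_square: "(a::real) * b \<le> a^2 + b^2"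
proof -
  have "2 * a * b \<le> a^2 + b^2" by (rule sum_squares_bound)
  moreover have "0 \<le> a^2" "0 \<le> b^2" by simp_all
  ultimately show ?thesis by (cases "a * b \<ge> 0") linarith+
qed

lemma abs_power_le_square_add_power:
  fixes d :: real
  assumes "2 \<le> j" "j \<le> q"
  shows "\<bar>d\<bar>^j \<le> d^2 + \<bar>d\<bar>^q"
proof (cases "\<bar>d\<bar> \<le> 1")
  case True
  have "\<bar>d\<bar>^j \<le> \<bar>d\<bar>^2" using True assms by (intro power_decreasing) auto
  then show ?thesis by (simp add: add_increasing2)
next
  case False
  have "\<bar>d\<bar>^j \<le> \<bar>d\<bar>^q" using False assms by (intro power_increasing) auto
  then show ?thesis by (simp add: add_increasing)
qed

lemma abs_powr_le_one_add_even_power: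
  fixes x p :: real
  assumes "0 \<le> p" "p \<le> real (2*r)"
  shows "\<bar>x\<bar> powr p \<le> 1 + x^(2*r)"
proof (cases "\<bar>x\<bar> \<le> 1")
  case True
  then have "\<bar>x\<bar> powr p \<le> 1" using assms by (intro powr_le1) auto
  then show ?thesis by (simp add: add_increasing2 zero_le_even_power)
next
  case False
  then have "\<bar>x\<bar> powr p \<le> \<bar>x\<bar> powr real (2*r)" using assms by (intro powr_mono) auto
  also have "\<dots> = \<bar>x\<bar>^(2*r)" using False by (intro powr_realpow) auto
  finally show ?thesis by (simp add: power_abs_two_mult)
qed

lemma power_ge_tangent:
  fixes u w :: real
  assumes "0 \<le> u" "0 \<le> w" "r \<ge> 1"
  shows "u^r + real r * u^(r-1) * (w-u) \<le> w^r"
proof -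
  have diff: "w^r - u^r = (w - u) * (\<Sum>i<r. u^(r - Suc i) * w^i)"
    by (rule power_diff_sumr2)
  have summand_le: "(w - u) * u^(r-1) \<le> (w - u) * (u^(r - Suc i) * w^i)" if "i < r" for i
  proof -
    have split: "u^(r-1) = u^(r - Suc i) * u^i" using that by (simp add: power_add[symmetric])
    show ?thesis
    proof (cases "u \<le> w")
      case True
      then show ?thesis unfolding split using assms
        by (intro mult_left_mono mult_left_mono[of "u^i"] power_mono) auto
    next
      case False
      have "u^(r - Suc i) * w^i \<le> u^(r - Suc i) * u^i"
        using False assms by (intro mult_left_mono power_mono) auto
      then show ?thesis unfolding split by (rule mult_left_mono_neg) (use False in auto)
    qed
  qed
  have "(w - u) * (real r * u^(r-1)) = (\<Sum>i<r. (w - u) * u^(r-1))" by simp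
  also have "\<dots> \<le> (\<Sum>i<r. (w - u) * (u^(r - Suc i) * w^i))" by (intro sum_mono summand_le) auto
  also have "\<dots> = w^r - u^r" unfolding diff by (simp add: sum_distrib_left)
  finally show ?thesis by (simp add: algebra_simps)
qed

lemma abs_power_ge_tangent:
  fixes x y :: real
  assumes "r \<ge> 1"
  shows "real r * \<bar>x\<bar>^(r-1) * sgn x * (y - x) \<le> \<bar>y\<bar>^r - \<bar>x\<bar>^r"
proof -
  have "sgn x * x = \<bar>x\<bar>" by (auto simp: sgn_if)
  then have "real r * \<bar>x\<bar>^(r-1) * sgn x * (y - x) = real r * \<bar>x\<bar>^(r-1) * (sgn x * y - \<bar>x\<bar>)"
    by (simp add: algebra_simps)
  also have "\<dots> \<le> real r * \<bar>x\<bar>^(r-1) * (\<bar>y\<bar> - \<bar>x\<bar>)"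
    by (intro mult_left_mono) (auto simp: sgn_if)
  also have "\<dots> \<le> \<bar>y\<bar>^r - \<bar>x\<bar>^r" using power_ge_tangent[of "\<bar>x\<bar>" "\<bar>y\<bar>" r] assms by simp
  finally show ?thesis .
qed

section \<open>Running maxima, Gronwall and one-sided reflection\<close>

text \<open>A pathwise form of Doob's \<open>L\<^sup>2\<close> inequality: the defect
  \<open>4 x\<^sub>n\<^sup>2 - 4 \<Sum> m\<^sub>i (x\<^sub>i\<^sub>+\<^sub>1 - x\<^sub>i) - m\<^sub>n\<^sup>2 - (2 x\<^sub>n - m\<^sub>n)\<^sup>2\<close> of the running maximum \<open>m\<close>
  never decreases.\<close>

lemma running_max_square_le:
  fixes x :: "nat \<Rightarrow> real"
  shows "(Max (x ` {..n}))^2 \<le> 4 * (x n)^2 - 4 * (\<Sum>i<n. Max (x ` {..i}) * (x (Suc i) - x i))"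
proof -
  define m where "m i = Max (x ` {..i})" for i
  have "(2 * x n - m n)^2 \<le> 4 * (x n)^2 - 4 * (\<Sum>i<n. m i * (x (Suc i) - x i)) - (m n)^2"
  proof (induction n)
    case 0
    then show ?case unfolding m_def by (simp add: power2_eq_square)
  next
    case (Suc n)
    have m_Suc: "m (Suc n) = max (x (Suc n)) (m n)" unfolding m_def by (simp add: atMost_Suc)
    show ?case
    proof (cases "x (Suc n) \<le> m n")
      case True
      then have "m (Suc n) = m n" using m_Suc by simp
      then show ?thesis using Suc.IH by (simp add: power2_eq_square algebra_simps)
    next
      case False
      then have new_max: "m (Suc n) = x (Suc n)" using m_Suc by simp
      have "4 * (x (Suc n))^2 - 4 * (\<Sum>i<Suc n. m i * (x (Suc i) - x i)) - (m (Suc n))^2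
            - (2 * x (Suc n) - m (Suc n))^2
         = (4 * (x n)^2 - 4 * (\<Sum>i<n. m i * (x (Suc i) - x i)) - (m n)^2 - (2 * x n - m n)^2)
            + 2 * (x (Suc n) - m n)^2"
        unfolding new_max by (simp add: power2_eq_square algebra_simps)
      then show ?thesis using Suc.IH zero_le_power2[of "x (Suc n) - m n"] by linarith
    qed
  qed
  then show ?thesis unfolding m_def using zero_le_power2[of "2 * x n - Max (x ` {..n})"] by linarith
qed

lemma integrable_dominated:
  fixes h u :: "'a \<Rightarrow> real"
  assumes "integrable M u" "h \<in> borel_measurable M" "\<And>x. x \<in> space M \<Longrightarrow> \<bar>h x\<bar> \<le> u x"
  shows "integrable M h"
  by (rule Bochner_Integration.integrable_bound[OF assms(1,2)]) (use assms(3) in \<open>force intro: AE_I2\<close>)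

lemma integrable_running_max_square:
  fixes x :: "nat \<Rightarrow> 'a \<Rightarrow> real"
  assumes "\<And>i. i \<le> n \<Longrightarrow> x i \<in> borel_measurable M" "\<And>i. i \<le> n \<Longrightarrow> integrable M (\<lambda>\<omega>. (x i \<omega>)^2)"
  shows "integrable M (\<lambda>\<omega>. (Max ((\<lambda>i. x i \<omega>) ` {..n}))^2)"
proof (rule integrable_dominated)
  show "integrable M (\<lambda>\<omega>. \<Sum>j\<le>n. (x j \<omega>)^2)"
    using assms(2) by (intro Bochner_Integration.integrable_sum) auto
  show "(\<lambda>\<omega>. (Max ((\<lambda>i. x i \<omega>) ` {..n}))^2) \<in> borel_measurable M"
    using assms(1) by (intro borel_measurable_power borel_measurable_Max) auto
  fix \<omega>
  have "Max ((\<lambda>i. x i \<omega>) ` {..n}) \<in> (\<lambda>i. x i \<omega>) ` {..n}" by (intro Max_in) auto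
  then obtain j where "j \<in> {..n}" "Max ((\<lambda>i. x i \<omega>) ` {..n}) = x j \<omega>" by blast
  moreover have "(x j \<omega>)^2 \<le> (\<Sum>j\<le>n. (x j \<omega>)^2)"
    using \<open>j \<in> {..n}\<close> by (intro member_le_sum) auto
  ultimately show "\<bar>(Max ((\<lambda>i. x i \<omega>) ` {..n}))^2\<bar> \<le> (\<Sum>j\<le>n. (x j \<omega>)^2)" by simp
qed

lemma doob_running_max_square:
  fixes x :: "nat \<Rightarrow> 'a \<Rightarrow> real"
  assumes x: "\<And>i. i \<le> n \<Longrightarrow> x i \<in> borel_measurable M" "\<And>i. i \<le> n \<Longrightarrow> integrable M (\<lambda>\<omega>. (x i \<omega>)^2)"
    and increment: "\<And>i. i < n \<Longrightarrow>
      integrable M (\<lambda>\<omega>. Max ((\<lambda>j. x j \<omega>) ` {..i}) * (x (Suc i) \<omega> - x i \<omega>)) \<and>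
      0 \<le> (\<integral>\<omega>. Max ((\<lambda>j. x j \<omega>) ` {..i}) * (x (Suc i) \<omega> - x i \<omega>) \<partial>M)"
  shows "(\<integral>\<omega>. (Max ((\<lambda>i. x i \<omega>) ` {..n}))^2 \<partial>M) \<le> 4 * (\<integral>\<omega>. (x n \<omega>)^2 \<partial>M)"
proof -
  define tr where "tr i \<omega> = Max ((\<lambda>j. x j \<omega>) ` {..i}) * (x (Suc i) \<omega> - x i \<omega>)" for i \<omega>
  have i_tr: "integrable M (\<lambda>\<omega>. \<Sum>i<n. tr i \<omega>)"
    using increment unfolding tr_def by (intro Bochner_Integration.integrable_sum) auto
  have "(\<integral>\<omega>. (Max ((\<lambda>i. x i \<omega>) ` {..n}))^2 \<partial>M) \<le> (\<integral>\<omega>. 4 * (x n \<omega>)^2 - 4 * (\<Sum>i<n. tr i \<omega>) \<partial>M)"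
    using integrable_running_max_square[OF x] x(2)[of n] i_tr running_max_square_le
    unfolding tr_def by (intro integral_mono) auto
  also have "\<dots> = 4 * (\<integral>\<omega>. (x n \<omega>)^2 \<partial>M) - 4 * (\<Sum>i<n. \<integral>\<omega>. tr i \<omega> \<partial>M)"
    using x(2)[of n] i_tr increment unfolding tr_def by (simp add: Bochner_Integration.integral_sum)
  also have "\<dots> \<le> 4 * (\<integral>\<omega>. (x n \<omega>)^2 \<partial>M)"
    using sum_nonneg[of "{..<n}" "\<lambda>i. \<integral>\<omega>. tr i \<omega> \<partial>M"] increment unfolding tr_def by simp
  finally show ?thesis .
qed

lemma discrete_gronwall:
  fixes u :: "nat \<Rightarrow> real"
  assumes "A \<ge> 0" "c \<ge> 0"
    and "\<And>n. n \<le> M \<Longrightarrow> u n \<le> A + c * (\<Sum>k<n. u k)"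
  shows "n \<le> M \<Longrightarrow> u n \<le> A * (1 + c)^n"
proof (induction n rule: less_induct)
  case (less n)
  have geometric: "c * (\<Sum>k<n. (1+c)^k) = (1+c)^n - 1"
    by (induction n) (auto simp: algebra_simps)
  have "u n \<le> A + c * (\<Sum>k<n. u k)" using assms(3) less.prems by simp
  also have "\<dots> \<le> A + c * (\<Sum>k<n. A * (1+c)^k)"
    using less assms by (intro add_left_mono mult_left_mono sum_mono) auto
  also have "\<dots> = A + A * (c * (\<Sum>k<n. (1+c)^k))"
    by (simp add: sum_distrib_left mult_ac)
  finally show ?case unfolding geometric by (simp add: algebra_simps)
qed

lemma reflection_constant_without_contact:
  fixes xi L :: "real \<Rightarrow> real"
  assumes st: "0 \<le> s" "s \<le> t" "t \<le> T"
    and cL: "continuous_on {0..T} L" and mL: "mono_on {0..T} L"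
    and touch: "\<forall>s t. 0 \<le> s \<and> s \<le> t \<and> t \<le> T \<and> L s < L t \<longrightarrow> (\<exists>r\<in>{s..t}. xi r = c)"
    and no_contact: "\<forall>r\<in>{s<..t}. xi r \<noteq> c"
  shows "L s = L t"
proof (rule ccontr)
  assume "L s \<noteq> L t"
  moreover have "L s \<le> L t" using mL st by (auto intro: mono_onD)
  ultimately have lt: "L s < L t" by simp
  then have "s < t" using st by (cases "s = t") auto
  have "s \<in> {0..T}" using st by auto
  then obtain d where d: "d > 0" "\<forall>x'\<in>{0..T}. dist x' s < d \<longrightarrow> dist (L x') (L s) < L t - L s"
    using cL lt unfolding continuous_on_iff by (metis diff_gt_0_iff_gt)
  define s' where "s' = min t (s + d/2)"
  have s': "s < s'" "s' \<le> t" "dist s' s < d" "s' \<in> {0..T}"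
    using \<open>s < t\<close> d st unfolding s'_def dist_real_def by auto
  then have "L s' < L t" using d unfolding dist_real_def by force
  then obtain r where "r \<in> {s'..t}" "xi r = c" using touch s' st by (meson order_trans less_imp_le)
  then show False using no_contact s' by auto
qed

text \<open>One-sided Skorokhod estimate: after the last contact with the barrier \<open>c\<close> before \<open>t\<close>,
  the regulator \<open>L\<close> is flat, so \<open>xi t - c\<close> is an increment of \<open>xi - L\<close>.\<close>

lemma reflected_path_bound:
  fixes xi L :: "real \<Rightarrow> real"
  assumes t: "0 \<le> t" "t \<le> T"
    and cxi: "continuous_on {0..T} xi" and cL: "continuous_on {0..T} L"
    and mL: "mono_on {0..T} L" and L0: "L 0 = 0"
    and ge: "\<forall>s\<in>{0..T}. c \<le> xi s"
    and touch: "\<forall>s t. 0 \<le> s \<and> s \<le> t \<and> t \<le> T \<and> L s < L t \<longrightarrow> (\<exists>r\<in>{s..t}. xi r = c)"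
    and R: "\<forall>s\<in>{0..t}. \<bar>xi s - L s - x0\<bar> \<le> R"
  shows "\<bar>xi t\<bar> \<le> \<bar>c\<bar> + \<bar>x0\<bar> + 2*R"
proof -
  define Z where "Z = {s\<in>{0..t}. xi s = c}"
  have flat: "L s = L t" if "0 \<le> s" "s \<le> t" "\<forall>r\<in>{s<..t}. xi r \<noteq> c" for s
    using reflection_constant_without_contact[OF that(1,2) t(2) cL mL touch that(3)] .
  have "\<exists>s\<in>{0..t}. L s = L t \<and> (xi s = c \<or> L t = 0)"
  proof (cases "Z = {}")
    case True
    then have "L 0 = L t" using t by (intro flat) (auto simp: Z_def)
    then show ?thesis using L0 t by (intro bexI[of _ 0]) auto
  next
    case False
    have "continuous_on {0..t} xi" using t by (intro continuous_on_subset[OF cxi]) auto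
    then have "closed Z" unfolding Z_def by (rule continuous_closed_preimage_constant) auto
    moreover have bdd: "bdd_above Z" unfolding Z_def by (auto intro: bdd_aboveI[of _ t])
    ultimately have last: "Sup Z \<in> Z" using False by (intro closed_contains_Sup)
    have "xi r \<noteq> c" if r: "r \<in> {Sup Z<..t}" for r
    proof
      assume "xi r = c"
      then have "r \<in> Z" using r last unfolding Z_def by auto
      then show False using cSup_upper[OF _ bdd] r by fastforce
    qed
    then have "L (Sup Z) = L t" using last unfolding Z_def by (intro flat) auto
    then show ?thesis using last unfolding Z_def by blast
  qed
  then obtain s where s: "0 \<le> s" "s \<le> t" "L s = L t" "xi s = c \<or> L t = 0" by auto
  have "\<bar>xi s - L s - x0\<bar> \<le> R" "\<bar>xi t - L t - x0\<bar> \<le> R" using R s(1,2) t(1) by auto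
  moreover have "c \<le> xi t" using ge t by auto
  ultimately show ?thesis using s by (smt (verit))
qed

section \<open>Moments of Brownian increments\<close>

text \<open>In one step of length \<open>\<le> \<tau>\<close> the binomial coefficients contribute \<open>\<Sum>\<^sub>j (2r choose j) = 2\<^sup>2\<^sup>r\<close>,
  and \<open>1 + (2r)! \<tau>\<^sup>r\<^sup>-\<^sup>1\<close> bounds the absolute Gaussian moments \<open>E |\<Delta>B|\<^sup>j / \<Delta>t\<close>, \<open>2 \<le> j \<le> 2r\<close>.\<close>

definition ito_step_const :: "nat \<Rightarrow> real \<Rightarrow> real" where
  "ito_step_const r \<tau> = 2^(2*r) * (1 + fact (2*r) * \<tau>^(r-1))"

lemma ito_step_const_nonneg: "0 \<le> \<tau> \<Longrightarrow> 0 \<le> ito_step_const r \<tau>"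
  unfolding ito_step_const_def by simp

lemma mixed_power_integrable:
  fixes Z G :: "'a \<Rightarrow> real"
  assumes Z: "Z \<in> borel_measurable M" and G: "G \<in> borel_measurable M"
    and iZ: "integrable M (\<lambda>\<omega>. Z \<omega>^(2*r))" and iG: "integrable M (\<lambda>\<omega>. G \<omega>^(2*r))"
    and j: "j \<le> 2*r"
  shows "integrable M (\<lambda>\<omega>. G \<omega>^j * Z \<omega>^(2*r - j))"
    "(\<integral>\<omega>. \<bar>G \<omega>^j * Z \<omega>^(2*r - j)\<bar> \<partial>M) \<le> (\<integral>\<omega>. Z \<omega>^(2*r) \<partial>M) + (\<integral>\<omega>. G \<omega>^(2*r) \<partial>M)"
proof -
  have bound: "\<bar>G \<omega>^j * Z \<omega>^(2*r - j)\<bar> \<le> Z \<omega>^(2*r) + G \<omega>^(2*r)" for \<omega>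
  proof -
    have "\<bar>G \<omega>^j * Z \<omega>^(2*r - j)\<bar> = \<bar>Z \<omega>\<bar>^(2*r - j) * \<bar>G \<omega>\<bar>^j" by (simp add: abs_mult power_abs)
    also have "\<dots> \<le> \<bar>Z \<omega>\<bar>^(2*r) + \<bar>G \<omega>\<bar>^(2*r)" by (rule mult_power_le_power_add) (use j in auto)
    finally show ?thesis by (simp only: power_abs_two_mult)
  qed
  have iZG: "integrable M (\<lambda>\<omega>. Z \<omega>^(2*r) + G \<omega>^(2*r))" using iZ iG by simp
  show int: "integrable M (\<lambda>\<omega>. G \<omega>^j * Z \<omega>^(2*r - j))"
    by (rule integrable_dominated[OF iZG _ bound]) (use Z G in simp)
  have "(\<integral>\<omega>. \<bar>G \<omega>^j * Z \<omega>^(2*r - j)\<bar> \<partial>M) \<le> (\<integral>\<omega>. Z \<omega>^(2*r) + G \<omega>^(2*r) \<partial>M)"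
    by (rule integral_mono[OF integrable_abs[OF int] iZG bound])
  then show "(\<integral>\<omega>. \<bar>G \<omega>^j * Z \<omega>^(2*r - j)\<bar> \<partial>M) \<le> (\<integral>\<omega>. Z \<omega>^(2*r) \<partial>M) + (\<integral>\<omega>. G \<omega>^(2*r) \<partial>M)"
    using iZ iG by simp
qed

lemma brownian_motion_prob_space: "brownian_motion P F B \<Longrightarrow> prob_space P"
  unfolding brownian_motion_def usual_filtration_def by auto

locale brownian =
  fixes P :: "'w measure" and F :: "real \<Rightarrow> 'w measure" and B :: "real \<Rightarrow> 'w \<Rightarrow> real"
  assumes is_brownian: "brownian_motion P F B"
begin

sublocale prob_space P
  using is_brownian by (rule brownian_motion_prob_space)

lemma subalgebra_filtration: "0 \<le> t \<Longrightarrow> subalgebra P (F t)"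
  using is_brownian unfolding brownian_motion_def usual_filtration_def by auto

lemma space_filtration: "0 \<le> t \<Longrightarrow> space (F t) = space P"
  using subalgebra_filtration unfolding subalgebra_def by auto

lemma measurable_filtration_mono:
  assumes "0 \<le> s" "s \<le> t" "h \<in> borel_measurable (F s)"
  shows "h \<in> borel_measurable (F t)"
proof (rule measurable_from_subalg[OF _ assms(3)])
  have "sets (F s) \<subseteq> sets (F t)"
    using is_brownian assms(1,2) unfolding brownian_motion_def usual_filtration_def by blast
  then show "subalgebra (F t) (F s)"
    unfolding subalgebra_def using space_filtration assms(1,2) by auto
qed

lemma measurable_filtration_P: "0 \<le> t \<Longrightarrow> h \<in> borel_measurable (F t) \<Longrightarrow> h \<in> borel_measurable P"
  by (rule measurable_from_subalg[OF subalgebra_filtration])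

lemma B_adapted: "0 \<le> s \<Longrightarrow> s \<le> t \<Longrightarrow> B s \<in> borel_measurable (F t)"
  using is_brownian measurable_filtration_mono unfolding brownian_motion_def by blast

lemma B_continuous: "\<omega> \<in> space P \<Longrightarrow> continuous_on {0..} (\<lambda>t. B t \<omega>)"
  using is_brownian unfolding brownian_motion_def by auto

lemma increment_measurable: "0 \<le> s \<Longrightarrow> s \<le> s' \<Longrightarrow> (\<lambda>\<omega>. B s' \<omega> - B s \<omega>) \<in> borel_measurable P"
  using measurable_filtration_P[OF _ B_adapted[of s' s']] measurable_filtration_P[OF _ B_adapted[of s s]]
  by (intro borel_measurable_diff) auto

lemma indep_var_increment:
  fixes Z :: "'w \<Rightarrow> real" and \<phi> :: "real \<Rightarrow> real"
  assumes s: "0 \<le> s" "s < s'" and Z: "Z \<in> borel_measurable (F s)" and \<phi>: "\<phi> \<in> borel_measurable borel"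
  shows "indep_var borel Z borel (\<lambda>\<omega>. \<phi> (B s' \<omega> - B s \<omega>))"
proof -
  define D where "D \<omega> = B s' \<omega> - B s \<omega>" for \<omega>
  have indep: "indep_set (sets (F s)) (sets (vimage_algebra (space P) D borel))"
    using is_brownian s unfolding brownian_motion_def D_def by blast
  have Z_sets: "sigma_sets (space P) {Z -` A \<inter> space P | A. A \<in> sets borel} \<subseteq> sets (F s)"
  proof -
    have "{Z -` A \<inter> space P | A. A \<in> sets borel} \<subseteq> sets (F s)"
      using measurable_sets[OF Z] space_filtration[OF s(1)] by auto
    from sets.sigma_sets_subset[OF this] show ?thesis using space_filtration[OF s(1)] by simp
  qed
  have \<phi>D_sets: "sigma_sets (space P) {(\<lambda>\<omega>. \<phi> (D \<omega>)) -` A \<inter> space P | A. A \<in> sets borel}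
      \<subseteq> sets (vimage_algebra (space P) D borel)"
  proof -
    have "{(\<lambda>\<omega>. \<phi> (D \<omega>)) -` A \<inter> space P | A. A \<in> sets borel} \<subseteq> sets (vimage_algebra (space P) D borel)"
    proof safe
      fix A :: "real set" assume "A \<in> sets borel"
      then have "\<phi> -` A \<in> sets borel" using measurable_sets[OF \<phi>] by simp
      moreover have "(\<lambda>\<omega>. \<phi> (D \<omega>)) -` A \<inter> space P = D -` (\<phi> -` A) \<inter> space P" by auto
      ultimately show "(\<lambda>\<omega>. \<phi> (D \<omega>)) -` A \<inter> space P \<in> sets (vimage_algebra (space P) D borel)"
        by (subst sets_vimage_algebra2) auto
    qed
    from sets.sigma_sets_subset[OF this] show ?thesis by simp
  qed
  have "indep_set (sigma_sets (space P) {Z -` A \<inter> space P | A. A \<in> sets borel})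
      (sigma_sets (space P) {(\<lambda>\<omega>. \<phi> (D \<omega>)) -` A \<inter> space P | A. A \<in> sets borel})"
    using indep Z_sets \<phi>D_sets unfolding indep_sets2_eq by blast
  moreover have "(\<lambda>\<omega>. \<phi> (D \<omega>)) \<in> borel_measurable P"
    unfolding D_def using increment_measurable s by (intro measurable_compose[OF _ \<phi>]) auto
  ultimately show ?thesis
    unfolding indep_var_eq D_def using measurable_filtration_P[OF s(1) Z] by simp
qed

lemma integral_mult_increment:
  fixes Z :: "'w \<Rightarrow> real" and \<phi> :: "real \<Rightarrow> real"
  assumes s: "0 \<le> s" "s \<le> s'" and Z: "Z \<in> borel_measurable (F s)" and \<phi>: "\<phi> \<in> borel_measurable borel"
    and iZ: "integrable P Z" and i\<phi>: "integrable P (\<lambda>\<omega>. \<phi> (B s' \<omega> - B s \<omega>))"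
  shows "integrable P (\<lambda>\<omega>. Z \<omega> * \<phi> (B s' \<omega> - B s \<omega>))"
    "expectation (\<lambda>\<omega>. Z \<omega> * \<phi> (B s' \<omega> - B s \<omega>))
       = expectation Z * expectation (\<lambda>\<omega>. \<phi> (B s' \<omega> - B s \<omega>))"
proof -
  have "integrable P (\<lambda>\<omega>. Z \<omega> * \<phi> (B s' \<omega> - B s \<omega>)) \<and>
    expectation (\<lambda>\<omega>. Z \<omega> * \<phi> (B s' \<omega> - B s \<omega>))
       = expectation Z * expectation (\<lambda>\<omega>. \<phi> (B s' \<omega> - B s \<omega>))"
  proof (cases "s = s'")
    case True
    then show ?thesis using iZ by (simp add: prob_space)
  next
    case False
    then have "indep_var borel Z borel (\<lambda>\<omega>. \<phi> (B s' \<omega> - B s \<omega>))"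
      using s by (intro indep_var_increment[OF _ _ Z \<phi>]) auto
    then show ?thesis by (simp add: indep_var_integrable indep_var_lebesgue_integral iZ i\<phi>)
  qed
  then show "integrable P (\<lambda>\<omega>. Z \<omega> * \<phi> (B s' \<omega> - B s \<omega>))"
    "expectation (\<lambda>\<omega>. Z \<omega> * \<phi> (B s' \<omega> - B s \<omega>))
       = expectation Z * expectation (\<lambda>\<omega>. \<phi> (B s' \<omega> - B s \<omega>))" by auto
qed

lemma increment_moments:
  assumes s: "0 \<le> s" "s \<le> s'"
  shows "integrable P (\<lambda>\<omega>. (B s' \<omega> - B s \<omega>)^j)"
    "expectation (\<lambda>\<omega>. (B s' \<omega> - B s \<omega>)^(2*k)) = (s' - s)^k * (fact (2*k) / (2^k * fact k))"
    "expectation (\<lambda>\<omega>. (B s' \<omega> - B s \<omega>)^(2*k+1)) = 0"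
proof -
  have "integrable P (\<lambda>\<omega>. (B s' \<omega> - B s \<omega>)^j) \<and>
    expectation (\<lambda>\<omega>. (B s' \<omega> - B s \<omega>)^(2*k)) = (s' - s)^k * (fact (2*k) / (2^k * fact k)) \<and>
    expectation (\<lambda>\<omega>. (B s' \<omega> - B s \<omega>)^(2*k+1)) = 0"
  proof (cases "s = s'")
    case True
    then show ?thesis by (cases k) (auto simp: prob_space)
  next
    case False
    then have lt: "s < s'" using s by auto
    define \<sigma> where "\<sigma> = sqrt (s' - s)"
    have \<sigma>_pos: "0 < \<sigma>" unfolding \<sigma>_def using lt by simp
    have \<sigma>_sq: "\<sigma>^2 = s' - s" unfolding \<sigma>_def using lt by simp
    have normal: "distributed P lborel (\<lambda>\<omega>. B s' \<omega> - B s \<omega>) (normal_density 0 \<sigma>)"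
      using is_brownian lt s unfolding brownian_motion_def \<sigma>_def by blast
    have pow_meas: "(\<lambda>x::real. x^n) \<in> borel_measurable lborel" for n by simp
    have int: "integrable P (\<lambda>\<omega>. (B s' \<omega> - B s \<omega>)^n)" for n
      using distributed_integrable[OF normal pow_meas, of n] integrable_normal_moment[OF \<sigma>_pos, of 0 n] by simp
    have moment: "expectation (\<lambda>\<omega>. (B s' \<omega> - B s \<omega>)^n) = (\<integral>x. normal_density 0 \<sigma> x * x^n \<partial>lborel)" for n
      using distributed_integral[OF normal pow_meas, of n] by simp
    have "(\<integral>x. normal_density 0 \<sigma> x * x^(2*k) \<partial>lborel) = fact (2 * k) / ((2 / \<sigma>\<^sup>2)^k * fact k)"
      using integral_normal_moment_even[OF \<sigma>_pos, of 0 k] by simp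
    also have "\<dots> = (s' - s)^k * (fact (2*k) / (2^k * fact k))"
      using \<sigma>_pos unfolding \<sigma>_sq[symmetric] by (simp add: power_divide field_simps)
    finally show ?thesis
      using int moment[of "2*k"] moment[of "2*k+1"] integral_normal_moment_odd[OF \<sigma>_pos, of 0 k] by simp
  qed
  then show "integrable P (\<lambda>\<omega>. (B s' \<omega> - B s \<omega>)^j)"
    "expectation (\<lambda>\<omega>. (B s' \<omega> - B s \<omega>)^(2*k)) = (s' - s)^k * (fact (2*k) / (2^k * fact k))"
    "expectation (\<lambda>\<omega>. (B s' \<omega> - B s \<omega>)^(2*k+1)) = 0" by auto
qed

lemma increment_abs_moment_le:
  assumes s: "0 \<le> s" "s \<le> s'" "s' - s \<le> \<tau>" and j: "2 \<le> j" "j \<le> 2*r"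
  shows "expectation (\<lambda>\<omega>. \<bar>B s' \<omega> - B s \<omega>\<bar>^j) \<le> (s' - s) * (1 + fact (2*r) * \<tau>^(r-1))"
proof -
  let ?D = "\<lambda>\<omega>. B s' \<omega> - B s \<omega>"
  have r: "r \<ge> 1" using j by auto
  have i2: "integrable P (\<lambda>\<omega>. ?D \<omega>^2)" and iq: "integrable P (\<lambda>\<omega>. ?D \<omega>^(2*r))"
    using increment_moments(1)[OF s(1,2)] by auto
  have "expectation (\<lambda>\<omega>. \<bar>?D \<omega>\<bar>^j) \<le> expectation (\<lambda>\<omega>. ?D \<omega>^2 + ?D \<omega>^(2*r))"
  proof (rule integral_mono')
    show "integrable P (\<lambda>\<omega>. ?D \<omega>^2 + ?D \<omega>^(2*r))" using i2 iq by simp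
    show "\<bar>?D \<omega>\<bar>^j \<le> ?D \<omega>^2 + ?D \<omega>^(2*r)" for \<omega>
      using abs_power_le_square_add_power[OF j, of "?D \<omega>"] by (simp only: power_abs_two_mult)
    show "0 \<le> ?D \<omega>^2 + ?D \<omega>^(2*r)" for \<omega> by (simp add: zero_le_even_power)
  qed
  also have "\<dots> = (s' - s) + (s' - s)^r * (fact (2*r) / (2^r * fact r))"
    using i2 iq increment_moments(2)[OF s(1,2), of 1] increment_moments(2)[OF s(1,2), of r] by simp
  also have "(s' - s)^r * (fact (2*r) / (2^r * fact r)) \<le> ((s' - s) * \<tau>^(r-1)) * fact (2*r)"
  proof (rule mult_mono)
    have "(s' - s)^r = (s' - s) * (s' - s)^(r-1)" using r by (cases r) auto
    also have "\<dots> \<le> (s' - s) * \<tau>^(r-1)" using s by (intro mult_left_mono power_mono) auto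
    finally show "(s' - s)^r \<le> (s' - s) * \<tau>^(r-1)" .
    have "(1::real) * 1 \<le> 2^r * fact r" by (intro mult_mono) (auto simp: fact_ge_1)
    then show "fact (2*r) / (2^r * fact r) \<le> (fact (2*r) :: real)"
      by (simp add: divide_le_eq mult_le_cancel_left1 fact_gt_zero)
  qed (use s in auto)
  finally show ?thesis by (simp add: algebra_simps)
qed

lemma expectation_mult_increment_power_le:
  fixes W :: "'w \<Rightarrow> real"
  assumes s: "0 \<le> s" "s \<le> s'" "s' - s \<le> \<tau>" and j: "1 \<le> j" "j \<le> 2*r"
    and W: "W \<in> borel_measurable (F s)" and iW: "integrable P W"
  shows "expectation (\<lambda>\<omega>. W \<omega> * (B s' \<omega> - B s \<omega>)^j)
    \<le> expectation (\<lambda>\<omega>. \<bar>W \<omega>\<bar>) * ((s' - s) * (1 + fact (2*r) * \<tau>^(r-1)))"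
proof -
  let ?D = "\<lambda>\<omega>. B s' \<omega> - B s \<omega>"
  have factor: "expectation (\<lambda>\<omega>. W \<omega> * ?D \<omega>^j) = expectation W * expectation (\<lambda>\<omega>. ?D \<omega>^j)"
    by (rule integral_mult_increment(2)[OF s(1,2) W _ iW increment_moments(1)[OF s(1,2)]]) simp
  have rhs_nonneg: "0 \<le> expectation (\<lambda>\<omega>. \<bar>W \<omega>\<bar>) * ((s' - s) * (1 + fact (2*r) * \<tau>^(r-1)))"
    using s by (intro mult_nonneg_nonneg integral_nonneg_AE) auto
  show ?thesis
  proof (cases "j = 1")
    case True
    then show ?thesis using factor rhs_nonneg increment_moments(3)[OF s(1,2), of 0] by simp
  next
    case False
    have "expectation W * expectation (\<lambda>\<omega>. ?D \<omega>^j)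
        \<le> \<bar>expectation W\<bar> * \<bar>expectation (\<lambda>\<omega>. ?D \<omega>^j)\<bar>"
      by (simp add: abs_mult[symmetric])
    also have "\<dots> \<le> expectation (\<lambda>\<omega>. \<bar>W \<omega>\<bar>) * expectation (\<lambda>\<omega>. \<bar>?D \<omega>\<bar>^j)"
      using integral_abs_bound[of P W] integral_abs_bound[of P "\<lambda>\<omega>. ?D \<omega>^j"]
      by (intro mult_mono) (auto simp: power_abs)
    also have "\<dots> \<le> expectation (\<lambda>\<omega>. \<bar>W \<omega>\<bar>) * ((s' - s) * (1 + fact (2*r) * \<tau>^(r-1)))"
      using False j by (intro mult_left_mono increment_abs_moment_le[OF s]) auto
    finally show ?thesis unfolding factor .
  qed
qed

lemma increment_step_moment:
  fixes Z G :: "'w \<Rightarrow> real"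
  assumes s: "0 \<le> s" "s \<le> s'" "s' - s \<le> \<tau>"
    and Z: "Z \<in> borel_measurable (F s)" and G: "G \<in> borel_measurable (F s)"
    and iZ: "integrable P (\<lambda>\<omega>. Z \<omega>^(2*r))" and iG: "integrable P (\<lambda>\<omega>. G \<omega>^(2*r))"
  shows "integrable P (\<lambda>\<omega>. (Z \<omega> + G \<omega> * (B s' \<omega> - B s \<omega>))^(2*r))"
    "expectation (\<lambda>\<omega>. (Z \<omega> + G \<omega> * (B s' \<omega> - B s \<omega>))^(2*r))
       \<le> expectation (\<lambda>\<omega>. Z \<omega>^(2*r))
          + ito_step_const r \<tau> * (s' - s) * (expectation (\<lambda>\<omega>. Z \<omega>^(2*r)) + expectation (\<lambda>\<omega>. G \<omega>^(2*r)))"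
proof -
  let ?q = "2*r" and ?D = "\<lambda>\<omega>. B s' \<omega> - B s \<omega>"
  define W where "W j = (\<lambda>\<omega>. G \<omega>^j * Z \<omega>^(?q - j))" for j
  define c where "c j = real (?q choose j)" for j
  define EZG where "EZG = expectation (\<lambda>\<omega>. Z \<omega>^?q) + expectation (\<lambda>\<omega>. G \<omega>^?q)"
  define C where "C = (s' - s) * (1 + fact ?q * \<tau>^(r-1))"
  have W_meas: "W j \<in> borel_measurable (F s)" for j
    unfolding W_def using Z G by measurable
  note mixed = mixed_power_integrable[OF measurable_filtration_P[OF s(1) Z]
      measurable_filtration_P[OF s(1) G] iZ iG]
  have expand: "(Z \<omega> + G \<omega> * ?D \<omega>)^?q = (\<Sum>j\<le>?q. c j * (W j \<omega> * ?D \<omega>^j))" for \<omega>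
  proof -
    have "(Z \<omega> + G \<omega> * ?D \<omega>)^?q = (\<Sum>j\<le>?q. of_nat (?q choose j) * (G \<omega> * ?D \<omega>)^j * Z \<omega>^(?q - j))"
      by (subst add.commute) (rule binomial_ring)
    then show ?thesis
      by (simp add: W_def c_def power_mult_distrib mult_ac)
  qed
  have iW: "integrable P (W j)" if "j \<le> ?q" for j
    unfolding W_def by (rule mixed(1)[OF that])
  have int_term: "integrable P (\<lambda>\<omega>. c j * (W j \<omega> * ?D \<omega>^j))" if "j \<le> ?q" for j
    using integral_mult_increment(1)[OF s(1,2) W_meas _ iW[OF that] increment_moments(1)[OF s(1,2)]]
    by simp
  show "integrable P (\<lambda>\<omega>. (Z \<omega> + G \<omega> * ?D \<omega>)^?q)"
    unfolding expand using int_term by (intro Bochner_Integration.integrable_sum) auto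
  have term_le: "expectation (\<lambda>\<omega>. c j * (W j \<omega> * ?D \<omega>^j))
      \<le> (if j = 0 then expectation (\<lambda>\<omega>. Z \<omega>^?q) else 0) + c j * (EZG * C)" if "j \<le> ?q" for j
  proof (cases "j = 0")
    case True
    have "0 \<le> EZG * C" unfolding EZG_def C_def using s
      by (intro mult_nonneg_nonneg add_nonneg_nonneg integral_nonneg_AE) (auto simp: zero_le_even_power)
    then show ?thesis using True unfolding c_def W_def by simp
  next
    case False
    have "expectation (\<lambda>\<omega>. W j \<omega> * ?D \<omega>^j) \<le> expectation (\<lambda>\<omega>. \<bar>W j \<omega>\<bar>) * C"
      unfolding C_def using False that
      by (intro expectation_mult_increment_power_le[OF s _ _ W_meas iW]) auto
    also have "\<dots> \<le> EZG * C"
      unfolding EZG_def C_def W_def using s mixed(2)[OF that] by (intro mult_right_mono) auto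
    finally show ?thesis using False by (simp add: c_def mult_left_mono)
  qed
  have "expectation (\<lambda>\<omega>. (Z \<omega> + G \<omega> * ?D \<omega>)^?q) = (\<Sum>j\<le>?q. expectation (\<lambda>\<omega>. c j * (W j \<omega> * ?D \<omega>^j)))"
    unfolding expand using int_term by (intro Bochner_Integration.integral_sum) auto
  also have "\<dots> \<le> (\<Sum>j\<le>?q. (if j = 0 then expectation (\<lambda>\<omega>. Z \<omega>^?q) else 0) + c j * (EZG * C))"
    by (intro sum_mono term_le) auto
  also have "\<dots> = expectation (\<lambda>\<omega>. Z \<omega>^?q) + 2^?q * (EZG * C)"
  proof -
    have "(\<Sum>j\<le>?q. c j) = 2^?q"
      unfolding c_def using choose_row_sum[of ?q] by (simp flip: of_nat_sum)
    then show ?thesis by (simp add: sum.distrib flip: sum_distrib_right)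
  qed
  also have "2^?q * (EZG * C) = ito_step_const r \<tau> * (s' - s) * EZG"
    unfolding C_def ito_step_const_def by (simp add: algebra_simps)
  finally show "expectation (\<lambda>\<omega>. (Z \<omega> + G \<omega> * ?D \<omega>)^?q)
    \<le> expectation (\<lambda>\<omega>. Z \<omega>^?q) + ito_step_const r \<tau> * (s' - s) * EZG" .
qed

text \<open>By convexity the increment of \<open>|\<cdot>|\<^sup>r\<close> along the step dominates its tangent term, an
  \<open>F s\<close>-measurable multiple of \<open>B s' - B s\<close>, whose mean vanishes.\<close>

lemma expectation_weighted_increment_nonneg:
  fixes H Z G :: "'w \<Rightarrow> real"
  assumes r: "r \<ge> 1" and s: "0 \<le> s" "s \<le> s'"
    and H: "H \<in> borel_measurable (F s)" "\<And>\<omega>. 0 \<le> H \<omega>"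
    and Z: "Z \<in> borel_measurable (F s)" and G: "G \<in> borel_measurable (F s)"
    and iH: "integrable P (\<lambda>\<omega>. H \<omega>^2)"
    and iZ: "integrable P (\<lambda>\<omega>. Z \<omega>^(2*r))" and iG: "integrable P (\<lambda>\<omega>. G \<omega>^(2*r))"
  defines "Y' \<equiv> \<lambda>\<omega>. Z \<omega> + G \<omega> * (B s' \<omega> - B s \<omega>)"
  shows "integrable P (\<lambda>\<omega>. H \<omega> * (\<bar>Y' \<omega>\<bar>^r - \<bar>Z \<omega>\<bar>^r))"
    "0 \<le> expectation (\<lambda>\<omega>. H \<omega> * (\<bar>Y' \<omega>\<bar>^r - \<bar>Z \<omega>\<bar>^r))"
proof -
  let ?D = "\<lambda>\<omega>. B s' \<omega> - B s \<omega>"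
  define V where "V \<omega> = H \<omega> * (real r * \<bar>Z \<omega>\<bar>^(r-1) * sgn (Z \<omega>)) * G \<omega>" for \<omega>
  have iY': "integrable P (\<lambda>\<omega>. Y' \<omega>^(2*r))"
    unfolding Y'_def using increment_step_moment(1)[OF s order_refl Z G iZ iG] .
  have V_meas: "V \<in> borel_measurable (F s)" unfolding V_def using H(1) Z G by measurable
  have H_meas: "H \<in> borel_measurable P" and Y'_meas: "Y' \<in> borel_measurable P"
    and Z_meas: "Z \<in> borel_measurable P"
    unfolding Y'_def using measurable_filtration_P[OF s(1)] H(1) Z G increment_measurable[OF s]
    by (auto intro!: borel_measurable_add borel_measurable_times)
  have V_le: "\<bar>V \<omega>\<bar> \<le> real r * (H \<omega>^2 + Z \<omega>^(2*r) + G \<omega>^(2*r))" for \<omega>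
  proof -
    let ?b = "\<bar>Z \<omega>\<bar>^(r-1) * \<bar>G \<omega>\<bar>"
    have "\<bar>V \<omega>\<bar> \<le> real r * (H \<omega> * ?b)"
      unfolding V_def using H(2)[of \<omega>]
      by (auto simp: abs_mult abs_sgn_eq mult_ac intro!: mult_left_mono)
    also have "H \<omega> * ?b \<le> H \<omega>^2 + ?b^2" by (rule mult_le_square_add_square)
    also have "?b^2 = \<bar>Z \<omega>\<bar>^(2*r - 2) * \<bar>G \<omega>\<bar>^2"
      using r by (simp add: power_mult_distrib power_mult[symmetric] mult.commute right_diff_distrib')
    also have "\<dots> \<le> \<bar>Z \<omega>\<bar>^(2*r) + \<bar>G \<omega>\<bar>^(2*r)"
      using mult_power_le_power_add[of "\<bar>Z \<omega>\<bar>" "\<bar>G \<omega>\<bar>" 2 "2*r"] r by simp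
    finally show ?thesis using r by (simp add: power_abs_two_mult mult_left_mono add.assoc)
  qed
  have iV: "integrable P V"
    using iH iZ iG by (intro integrable_dominated[OF _ measurable_filtration_P[OF s(1) V_meas] V_le]) simp
  have mean_zero: "expectation (\<lambda>\<omega>. V \<omega> * ?D \<omega>) = 0"
    using integral_mult_increment(2)[OF s V_meas _ iV, of "\<lambda>d. d"]
      increment_moments(1)[OF s, of 1] increment_moments(3)[OF s, of 0] by simp
  have tangent: "V \<omega> * ?D \<omega> \<le> H \<omega> * (\<bar>Y' \<omega>\<bar>^r - \<bar>Z \<omega>\<bar>^r)" for \<omega>
  proof -
    have "H \<omega> * (real r * \<bar>Z \<omega>\<bar>^(r-1) * sgn (Z \<omega>) * (Y' \<omega> - Z \<omega>)) \<le> H \<omega> * (\<bar>Y' \<omega>\<bar>^r - \<bar>Z \<omega>\<bar>^r)"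
      by (intro mult_left_mono abs_power_ge_tangent r H(2))
    then show ?thesis unfolding V_def Y'_def by (simp add: mult_ac)
  qed
  have dominated: "\<bar>H \<omega> * (\<bar>Y' \<omega>\<bar>^r - \<bar>Z \<omega>\<bar>^r)\<bar> \<le> 2 * H \<omega>^2 + Y' \<omega>^(2*r) + Z \<omega>^(2*r)" for \<omega>
  proof -
    have "\<bar>H \<omega> * (\<bar>Y' \<omega>\<bar>^r - \<bar>Z \<omega>\<bar>^r)\<bar> \<le> H \<omega> * \<bar>Y' \<omega>\<bar>^r + H \<omega> * \<bar>Z \<omega>\<bar>^r"
      using H(2)[of \<omega>] by (simp add: abs_mult abs_le_iff algebra_simps)
    also have "\<dots> \<le> (H \<omega>^2 + (\<bar>Y' \<omega>\<bar>^r)^2) + (H \<omega>^2 + (\<bar>Z \<omega>\<bar>^r)^2)"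
      by (intro add_mono mult_le_square_add_square)
    finally show ?thesis by (simp only: abs_power_square)
  qed
  show int: "integrable P (\<lambda>\<omega>. H \<omega> * (\<bar>Y' \<omega>\<bar>^r - \<bar>Z \<omega>\<bar>^r))"
    using iH iY' iZ H_meas Y'_meas Z_meas by (intro integrable_dominated[OF _ _ dominated]) auto
  have "expectation (\<lambda>\<omega>. V \<omega> * ?D \<omega>) \<le> expectation (\<lambda>\<omega>. H \<omega> * (\<bar>Y' \<omega>\<bar>^r - \<bar>Z \<omega>\<bar>^r))"
    using integral_mult_increment(1)[OF s V_meas _ iV increment_moments(1)[OF s, of 1]]
    by (intro integral_mono[OF _ int tangent]) simp
  then show "0 \<le> expectation (\<lambda>\<omega>. H \<omega> * (\<bar>Y' \<omega>\<bar>^r - \<bar>Z \<omega>\<bar>^r))" using mean_zero by simp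
qed

lemma doob_discrete:
  fixes Y G :: "nat \<Rightarrow> 'w \<Rightarrow> real" and \<sigma> :: "nat \<Rightarrow> real"
  assumes r: "r \<ge> 1" and \<sigma>0: "0 \<le> \<sigma> 0" and \<sigma>_mono: "\<And>i. i < n \<Longrightarrow> \<sigma> i \<le> \<sigma> (Suc i)"
    and Y: "\<And>i. i \<le> n \<Longrightarrow> Y i \<in> borel_measurable (F (\<sigma> i))"
    and G: "\<And>i. i < n \<Longrightarrow> G i \<in> borel_measurable (F (\<sigma> i))"
    and step: "\<And>i \<omega>. i < n \<Longrightarrow> Y (Suc i) \<omega> = Y i \<omega> + G i \<omega> * (B (\<sigma> (Suc i)) \<omega> - B (\<sigma> i) \<omega>)"
    and iY: "\<And>i. i \<le> n \<Longrightarrow> integrable P (\<lambda>\<omega>. Y i \<omega>^(2*r))"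
    and iG: "\<And>i. i < n \<Longrightarrow> integrable P (\<lambda>\<omega>. G i \<omega>^(2*r))"
  shows "integrable P (\<lambda>\<omega>. (Max ((\<lambda>i. \<bar>Y i \<omega>\<bar>^r) ` {..n}))^2)"
    "expectation (\<lambda>\<omega>. (Max ((\<lambda>i. \<bar>Y i \<omega>\<bar>^r) ` {..n}))^2) \<le> 4 * expectation (\<lambda>\<omega>. Y n \<omega>^(2*r))"
proof -
  have \<sigma>_le: "\<sigma> j \<le> \<sigma> i" if "j \<le> i" "i \<le> n" for i j
    using that
  proof (induction i rule: dec_induct)
    case (step i)
    then show ?case using \<sigma>_mono[of i] by simp
  qed simp
  have \<sigma>_nonneg: "0 \<le> \<sigma> i" if "i \<le> n" for i using \<sigma>_le[of 0 i] \<sigma>0 that by simp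
  define x where "x i \<omega> = \<bar>Y i \<omega>\<bar>^r" for i \<omega>
  have ix: "integrable P (\<lambda>\<omega>. (x i \<omega>)^2)" if "i \<le> n" for i
    unfolding x_def abs_power_square using iY that .
  have x_meas: "x j \<in> borel_measurable (F (\<sigma> i))" if "j \<le> i" "i \<le> n" for i j
    unfolding x_def using measurable_filtration_mono[OF \<sigma>_nonneg \<sigma>_le Y] that by auto
  have x_meas_P: "x i \<in> borel_measurable P" if "i \<le> n" for i
    using measurable_filtration_P[OF \<sigma>_nonneg x_meas[OF order_refl]] that by simp
  have max_meas: "(\<lambda>\<omega>. Max ((\<lambda>j. x j \<omega>) ` {..i})) \<in> borel_measurable (F (\<sigma> i))" if "i \<le> n" for i
    using x_meas that by (intro borel_measurable_Max) auto
  have "integrable P (\<lambda>\<omega>. Max ((\<lambda>j. x j \<omega>) ` {..i}) * (x (Suc i) \<omega> - x i \<omega>)) \<and>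
      0 \<le> expectation (\<lambda>\<omega>. Max ((\<lambda>j. x j \<omega>) ` {..i}) * (x (Suc i) \<omega> - x i \<omega>))" if "i < n" for i
  proof -
    have "0 \<le> x 0 \<omega>" "x 0 \<omega> \<le> Max ((\<lambda>j. x j \<omega>) ` {..i})" for \<omega>
      unfolding x_def by (auto intro: Max_ge)
    then have max_nonneg: "0 \<le> Max ((\<lambda>j. x j \<omega>) ` {..i})" for \<omega> by (rule order_trans)
    have "integrable P (\<lambda>\<omega>. (Max ((\<lambda>j. x j \<omega>) ` {..i}))^2)"
      using x_meas_P ix that by (intro integrable_running_max_square) auto
    then show ?thesis
      unfolding x_def step[OF that]
      using expectation_weighted_increment_nonneg[OF r \<sigma>_nonneg \<sigma>_mono max_meas[unfolded x_def]
          max_nonneg[unfolded x_def] Y G _ iY iG] that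
      by auto
  qed
  then show "integrable P (\<lambda>\<omega>. (Max ((\<lambda>i. \<bar>Y i \<omega>\<bar>^r) ` {..n}))^2)"
    "expectation (\<lambda>\<omega>. (Max ((\<lambda>i. \<bar>Y i \<omega>\<bar>^r) ` {..n}))^2) \<le> 4 * expectation (\<lambda>\<omega>. Y n \<omega>^(2*r))"
    using integrable_running_max_square[of n x P] doob_running_max_square[of n x P] x_meas_P ix
    unfolding x_def abs_power_square by auto
qed

end

section \<open>The scheme on a half-line\<close>

lemma borel_measurable_continuous_on_compose_ge:
  fixes h :: "real \<Rightarrow> real"
  assumes h: "continuous_on {c..} h" and Y: "Y \<in> borel_measurable K"
    and ge: "\<And>\<omega>. \<omega> \<in> space K \<Longrightarrow> c \<le> Y \<omega>"
  shows "(\<lambda>\<omega>. h (Y \<omega>)) \<in> borel_measurable K"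
proof -
  have "continuous_on UNIV (\<lambda>x. h (max x c))"
    by (rule continuous_on_compose2[OF h]) (auto intro: continuous_intros)
  then have "(\<lambda>\<omega>. h (max (Y \<omega>) c)) \<in> borel_measurable K"
    by (intro measurable_compose[OF Y] borel_measurable_continuous_onI)
  moreover have "\<And>\<omega>. \<omega> \<in> space K \<Longrightarrow> h (max (Y \<omega>) c) = h (Y \<omega>)" using ge by (simp add: max_absorb1)
  ultimately show ?thesis by (simp cong: measurable_cong)
qed

text \<open>Continuity of \<open>f\<close> and \<open>g\<close> is used only for the measurability of \<open>f (X k)\<close> and \<open>g (X k)\<close>.\<close>

locale abep_half_line = brownian P F B
  for P :: "'w measure" and F :: "real \<Rightarrow> 'w measure" and B :: "real \<Rightarrow> 'w \<Rightarrow> real" +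
  fixes f g :: "real \<Rightarrow> real" and T :: real and M N :: nat and a x0 :: real
    and \<xi> U L :: "real \<Rightarrow> 'w \<Rightarrow> real" and Af Lf Ag Lg :: real
  assumes abep: "ABEP P F B f g T M N a \<infinity> x0 \<xi> U L"
    and T_pos: "T > 0" and M_pos: "M \<ge> 1" and N_pos: "N \<ge> 1"
    and f_cont: "continuous_on {a + 1 / real N..} f" and g_cont: "continuous_on {a + 1 / real N..} g"
    and Af: "Af \<ge> 0" and Lf: "Lf \<ge> 0" and Ag: "Ag \<ge> 0" and Lg: "Lg \<ge> 0"
    and f_growth: "\<And>x. x \<ge> a + 1 / real N \<Longrightarrow> \<bar>f x\<bar> \<le> Af + Lf * \<bar>x\<bar>"
    and g_growth: "\<And>x. x \<ge> a + 1 / real N \<Longrightarrow> \<bar>g x\<bar> \<le> Ag + Lg * \<bar>x\<bar>"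
begin

definition dt :: real where "dt = T / real M"
definition tk :: "nat \<Rightarrow> real" where "tk k = real k * dt"
definition X :: "nat \<Rightarrow> 'w \<Rightarrow> real" where "X k \<omega> = \<xi> (tk k) \<omega>"
definition ito :: "real \<Rightarrow> 'w \<Rightarrow> real" where
  "ito s \<omega> = elem_ito T M (\<lambda>s. g (\<xi> s \<omega>)) (\<lambda>s. B s \<omega>) s"
definition drift :: "real \<Rightarrow> 'w \<Rightarrow> real" where
  "drift s \<omega> = integral {0..s} (\<lambda>r. f (\<xi> (ell T M r) \<omega>))"
definition barrier :: real where "barrier = a + 1 / real N"

lemma dt_pos: "dt > 0" using T_pos M_pos unfolding dt_def by auto

lemma tk_mono: "i \<le> j \<Longrightarrow> tk i \<le> tk j"
  unfolding tk_def using dt_pos by (intro mult_right_mono) auto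

lemma tk_0[simp]: "tk 0 = 0" unfolding tk_def by simp
lemma tk_nonneg: "0 \<le> tk k" unfolding tk_def using dt_pos by simp
lemma tk_Suc: "tk (Suc k) = tk k + dt" unfolding tk_def by (simp add: algebra_simps)
lemma tk_M: "tk M = T" unfolding tk_def dt_def using M_pos by simp
lemma tk_le_T: "k \<le> M \<Longrightarrow> tk k \<le> T" using tk_mono[of k M] tk_M by simp
lemma dt_le_T: "dt \<le> T" unfolding dt_def using M_pos T_pos by (simp add: divide_le_eq)
lemma n_dt_le_T: "n \<le> M \<Longrightarrow> real n * dt \<le> T" using tk_le_T unfolding tk_def by simp

lemma barrier_abs_le: "\<bar>barrier\<bar> \<le> \<bar>a\<bar> + 1"
proof -
  have "0 < 1 / real N" "1 / real N \<le> 1" using N_pos by auto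
  then show ?thesis unfolding barrier_def by linarith
qed

lemma grid_interval_exists:
  assumes "0 \<le> s" "s \<le> tk n" "n \<le> M"
  shows "\<exists>k<M. tk k \<le> s \<and> s \<le> tk (Suc k) \<and> (k < n \<or> s = 0)"
proof (cases "s < tk n")
  case True
  define k where "k = nat \<lfloor>s / dt\<rfloor>"
  have "0 \<le> s / dt" using assms dt_pos by simp
  then have k: "real k \<le> s / dt" "s / dt < real k + 1" unfolding k_def by linarith+
  have "s / dt < real n" using True dt_pos unfolding tk_def by (simp add: field_simps)
  then have "k < n" using k by linarith
  moreover have "tk k \<le> s" "s \<le> tk (Suc k)" using k dt_pos unfolding tk_def by (auto simp: field_simps)
  ultimately show ?thesis using assms by (intro exI[of _ k]) auto
next
  case False
  then have s: "s = tk n" using assms by auto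
  show ?thesis
  proof (cases n)
    case 0 then show ?thesis using s M_pos by (intro exI[of _ 0]) (auto simp: tk_nonneg)
  next
    case (Suc m) then show ?thesis using s assms tk_mono[of m "Suc m"] by (intro exI[of _ m]) auto
  qed
qed

lemma ell_on_step:
  assumes "tk k \<le> r" "r < tk (Suc k)"
  shows "ell T M r = tk k"
proof -
  have "real k \<le> r / dt" "r / dt < real k + 1"
    using assms dt_pos unfolding tk_def by (auto simp: field_simps)
  then have "\<lfloor>r / dt\<rfloor> = int k" by (simp add: floor_eq_iff)
  then show ?thesis unfolding ell_def tk_def dt_def by simp
qed

lemma drift_has_integral_on_step:
  assumes "tk k \<le> s" "s \<le> tk (Suc k)"
  shows "((\<lambda>r. f (\<xi> (ell T M r) \<omega>)) has_integral ((s - tk k) * f (X k \<omega>))) {tk k..s}"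
proof (rule has_integral_spike_finite[of "{tk (Suc k)}"])
  show "((\<lambda>r. f (X k \<omega>)) has_integral ((s - tk k) * f (X k \<omega>))) {tk k..s}"
    using has_integral_const_real[of "f (X k \<omega>)" "tk k" s] assms by simp
  fix r assume "r \<in> {tk k..s} - {tk (Suc k)}"
  then have "tk k \<le> r" "r < tk (Suc k)" using assms by auto
  then show "f (\<xi> (ell T M r) \<omega>) = f (X k \<omega>)" unfolding X_def by (simp add: ell_on_step)
qed simp

lemma drift_has_integral:
  assumes "tk k \<le> s" "s \<le> tk (Suc k)"
  shows "((\<lambda>r. f (\<xi> (ell T M r) \<omega>)) has_integral (dt * (\<Sum>j<k. f (X j \<omega>)) + (s - tk k) * f (X k \<omega>))) {0..s}"
  using assms
proof (induction k arbitrary: s)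
  case 0
  then show ?case using drift_has_integral_on_step[of 0 s \<omega>] by simp
next
  case (Suc k)
  have "((\<lambda>r. f (\<xi> (ell T M r) \<omega>)) has_integral (dt * (\<Sum>j<k. f (X j \<omega>)) + (tk (Suc k) - tk k) * f (X k \<omega>)))
      {0..tk (Suc k)}"
    using Suc.IH[of "tk (Suc k)"] tk_mono[of k "Suc k"] by simp
  moreover have "dt * (\<Sum>j<k. f (X j \<omega>)) + (tk (Suc k) - tk k) * f (X k \<omega>) = dt * (\<Sum>j<Suc k. f (X j \<omega>))"
    by (simp add: tk_Suc algebra_simps)
  ultimately have "((\<lambda>r. f (\<xi> (ell T M r) \<omega>)) has_integral (dt * (\<Sum>j<Suc k. f (X j \<omega>))
      + (s - tk (Suc k)) * f (X (Suc k) \<omega>))) {0..s}"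
    using drift_has_integral_on_step[OF Suc.prems] Suc.prems tk_nonneg
    by (intro has_integral_combine[of 0 "tk (Suc k)" s]) auto
  then show ?case by simp
qed

lemma drift_abs_le:
  assumes "0 \<le> s" "s \<le> tk n" "n \<le> M"
  shows "\<bar>drift s \<omega>\<bar> \<le> dt * (\<Sum>j<n. \<bar>f (X j \<omega>)\<bar>)"
proof -
  obtain k where k: "k < M" "tk k \<le> s" "s \<le> tk (Suc k)" "k < n \<or> s = 0"
    using grid_interval_exists[OF assms] by blast
  show ?thesis
  proof (cases "s = 0")
    case True
    then show ?thesis unfolding drift_def using dt_pos by (simp add: sum_nonneg)
  next
    case False
    then have "k < n" using k by auto
    have "drift s \<omega> = dt * (\<Sum>j<k. f (X j \<omega>)) + (s - tk k) * f (X k \<omega>)"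
      unfolding drift_def using drift_has_integral[OF k(2,3)] by blast
    also have "\<bar>\<dots>\<bar> \<le> dt * (\<Sum>j<k. \<bar>f (X j \<omega>)\<bar>) + dt * \<bar>f (X k \<omega>)\<bar>"
    proof (rule abs_triangle_ineq[THEN order_trans], rule add_mono)
      show "\<bar>dt * (\<Sum>j<k. f (X j \<omega>))\<bar> \<le> dt * (\<Sum>j<k. \<bar>f (X j \<omega>)\<bar>)"
        using dt_pos by (simp add: abs_mult sum_abs)
      show "\<bar>(s - tk k) * f (X k \<omega>)\<bar> \<le> dt * \<bar>f (X k \<omega>)\<bar>"
        using k tk_Suc[of k] by (simp add: abs_mult mult_right_mono)
    qed
    also have "\<dots> = dt * (\<Sum>j<Suc k. \<bar>f (X j \<omega>)\<bar>)" by (simp add: algebra_simps)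
    also have "\<dots> \<le> dt * (\<Sum>j<n. \<bar>f (X j \<omega>)\<bar>)"
      using \<open>k < n\<close> dt_pos by (intro mult_left_mono sum_mono2) auto
    finally show ?thesis .
  qed
qed

lemma ito_eq_sum: "ito s \<omega> = (\<Sum>j<M. g (X j \<omega>) * (B (min s (tk (Suc j))) \<omega> - B (min s (tk j)) \<omega>))"
  unfolding ito_def elem_ito_def X_def tk_def dt_def by simp

lemma ito_on_step:
  assumes "k < M" "tk k \<le> s" "s \<le> tk (Suc k)"
  shows "ito s \<omega> = (\<Sum>j<k. g (X j \<omega>) * (B (tk (Suc j)) \<omega> - B (tk j) \<omega>)) + g (X k \<omega>) * (B s \<omega> - B (tk k) \<omega>)"
proof -
  let ?t = "\<lambda>j. g (X j \<omega>) * (B (min s (tk (Suc j))) \<omega> - B (min s (tk j)) \<omega>)"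
  have split: "{..<M} = {..<Suc k} \<union> {Suc k..<M}" using assms(1) by auto
  have "ito s \<omega> = sum ?t {..<Suc k} + sum ?t {Suc k..<M}"
    unfolding ito_eq_sum split by (rule sum.union_disjoint) auto
  then have "ito s \<omega> = sum ?t {..<k} + ?t k + sum ?t {Suc k..<M}" by simp
  moreover have "sum ?t {Suc k..<M} = 0"
  proof (intro sum.neutral ballI)
    fix j assume "j \<in> {Suc k..<M}"
    then have "tk (Suc k) \<le> tk j" "tk j \<le> tk (Suc j)" by (auto intro: tk_mono)
    then show "?t j = 0" using assms by (simp add: min_def)
  qed
  moreover have "sum ?t {..<k} = (\<Sum>j<k. g (X j \<omega>) * (B (tk (Suc j)) \<omega> - B (tk j) \<omega>))"
  proof (intro sum.cong refl)
    fix j assume "j \<in> {..<k}"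
    then have "tk (Suc j) \<le> tk k" "tk j \<le> tk (Suc j)" by (auto intro: tk_mono)
    then have "min s (tk (Suc j)) = tk (Suc j)" "min s (tk j) = tk j" using assms by auto
    then show "?t j = g (X j \<omega>) * (B (tk (Suc j)) \<omega> - B (tk j) \<omega>)" by simp
  qed
  moreover have "?t k = g (X k \<omega>) * (B s \<omega> - B (tk k) \<omega>)" using assms by (simp add: min_def)
  ultimately show ?thesis by simp
qed

lemma ito_increment:
  assumes "k < M" "tk k \<le> s" "s \<le> s'" "s' \<le> tk (Suc k)"
  shows "ito s' \<omega> = ito s \<omega> + g (X k \<omega>) * (B s' \<omega> - B s \<omega>)"
  using ito_on_step[of k s \<omega>] ito_on_step[of k s' \<omega>] assms by (simp add: algebra_simps)

lemma ito_0: "ito 0 \<omega> = 0"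
  using ito_on_step[of 0 0 \<omega>] M_pos tk_nonneg[of 1] by simp

lemma ito_continuous:
  assumes "\<omega> \<in> space P"
  shows "continuous_on {0..T} (\<lambda>s. ito s \<omega>)"
proof -
  have stopped: "continuous_on {0..T} (\<lambda>s. B (min s c) \<omega>)" if "0 \<le> c" for c
    using that by (intro continuous_on_compose2[OF B_continuous[OF assms]]) (auto intro: continuous_intros)
  show ?thesis unfolding ito_eq_sum
    by (intro continuous_on_sum continuous_on_mult continuous_on_const continuous_on_diff stopped tk_nonneg)
qed

lemma path_properties:
  assumes "\<omega> \<in> space P"
  shows "continuous_on {0..T} (\<lambda>t. \<xi> t \<omega>)" "continuous_on {0..T} (\<lambda>t. L t \<omega>)"
    "mono_on {0..T} (\<lambda>t. L t \<omega>)" "L 0 \<omega> = 0"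
    "\<forall>s\<in>{0..T}. barrier \<le> \<xi> s \<omega>"
    "\<forall>s t. 0 \<le> s \<and> s \<le> t \<and> t \<le> T \<and> L s \<omega> < L t \<omega> \<longrightarrow> (\<exists>r\<in>{s..t}. \<xi> r \<omega> = barrier)"
    "\<forall>t\<in>{0..T}. \<xi> t \<omega> = x0 + drift t \<omega> + ito t \<omega> + L t \<omega>"
proof -
  note path = abep[unfolded ABEP_def, THEN conjunct2, rule_format, OF assms]
  have "closure (DN N a \<infinity>) \<subseteq> {barrier..}"
    unfolding barrier_def by (rule closure_minimal) (auto simp: DN_def)
  then show "\<forall>s\<in>{0..T}. barrier \<le> \<xi> s \<omega>" using path by auto
  show "continuous_on {0..T} (\<lambda>t. \<xi> t \<omega>)" "continuous_on {0..T} (\<lambda>t. L t \<omega>)"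
    "mono_on {0..T} (\<lambda>t. L t \<omega>)" "L 0 \<omega> = 0"
    "\<forall>s t. 0 \<le> s \<and> s \<le> t \<and> t \<le> T \<and> L s \<omega> < L t \<omega> \<longrightarrow> (\<exists>r\<in>{s..t}. \<xi> r \<omega> = barrier)"
    "\<forall>t\<in>{0..T}. \<xi> t \<omega> = x0 + drift t \<omega> + ito t \<omega> + L t \<omega>"
    using path unfolding barrier_def drift_def ito_def by auto
qed

lemma X_ge_barrier: "\<omega> \<in> space P \<Longrightarrow> k \<le> M \<Longrightarrow> barrier \<le> X k \<omega>"
  unfolding X_def using path_properties(5) tk_nonneg tk_le_T by auto

lemma xi_abs_le_pathwise:
  assumes "\<omega> \<in> space P" "n \<le> M" "0 \<le> t" "t \<le> tk n" "\<forall>s\<in>{0..tk n}. \<bar>ito s \<omega>\<bar> \<le> R"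
  shows "\<bar>\<xi> t \<omega>\<bar> \<le> \<bar>a\<bar> + 1 + \<bar>x0\<bar> + 2 * (dt * (\<Sum>j<n. \<bar>f (X j \<omega>)\<bar>) + R)"
proof -
  have tT: "t \<le> T" using assms tk_le_T[of n] by auto
  have "\<forall>s\<in>{0..t}. \<bar>\<xi> s \<omega> - L s \<omega> - x0\<bar> \<le> dt * (\<Sum>j<n. \<bar>f (X j \<omega>)\<bar>) + R"
  proof
    fix s assume s: "s \<in> {0..t}"
    then have "\<xi> s \<omega> - L s \<omega> - x0 = drift s \<omega> + ito s \<omega>" using path_properties(7)[OF assms(1)] tT by auto
    moreover have "\<bar>drift s \<omega>\<bar> \<le> dt * (\<Sum>j<n. \<bar>f (X j \<omega>)\<bar>)" using drift_abs_le[of s n \<omega>] s assms by auto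
    moreover have "\<bar>ito s \<omega>\<bar> \<le> R" using assms s by auto
    ultimately show "\<bar>\<xi> s \<omega> - L s \<omega> - x0\<bar> \<le> dt * (\<Sum>j<n. \<bar>f (X j \<omega>)\<bar>) + R" by linarith
  qed
  then have "\<bar>\<xi> t \<omega>\<bar> \<le> \<bar>barrier\<bar> + \<bar>x0\<bar> + 2 * (dt * (\<Sum>j<n. \<bar>f (X j \<omega>)\<bar>) + R)"
    by (intro reflected_path_bound[OF assms(3) tT path_properties(1-6)[OF assms(1)]])
  then show ?thesis using barrier_abs_le by linarith
qed

lemma X_measurable:
  assumes "k \<le> M" "tk k \<le> t"
  shows "X k \<in> borel_measurable (F t)"
proof -
  have "\<xi> (tk k) \<in> borel_measurable (F (tk k))"
    using abep tk_nonneg[of k] tk_le_T[OF assms(1)] unfolding ABEP_def by simp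
  then show ?thesis unfolding X_def[abs_def] using measurable_filtration_mono tk_nonneg assms(2) by blast
qed

lemma f_X_measurable: "k \<le> M \<Longrightarrow> tk k \<le> t \<Longrightarrow> (\<lambda>\<omega>. f (X k \<omega>)) \<in> borel_measurable (F t)"
  using X_ge_barrier space_filtration[of t] tk_nonneg[of k]
  by (intro borel_measurable_continuous_on_compose_ge[OF f_cont[folded barrier_def] X_measurable]) auto

lemma g_X_measurable: "k \<le> M \<Longrightarrow> tk k \<le> t \<Longrightarrow> (\<lambda>\<omega>. g (X k \<omega>)) \<in> borel_measurable (F t)"
  using X_ge_barrier space_filtration[of t] tk_nonneg[of k]
  by (intro borel_measurable_continuous_on_compose_ge[OF g_cont[folded barrier_def] X_measurable]) auto

lemma ito_adapted:
  assumes "0 \<le> s" "s \<le> T"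
  shows "ito s \<in> borel_measurable (F s)"
proof -
  obtain k where k: "k < M" "tk k \<le> s" "s \<le> tk (Suc k)"
    using grid_interval_exists[of s M] assms tk_M by auto
  have "(\<lambda>\<omega>. g (X j \<omega>) * (B (tk (Suc j)) \<omega> - B (tk j) \<omega>)) \<in> borel_measurable (F s)" if "j < k" for j
  proof -
    have "tk j \<le> tk (Suc j)" "tk (Suc j) \<le> s" using tk_mono[of "Suc j" k] tk_mono[of j "Suc j"] that k by auto
    then show ?thesis using that k tk_nonneg[of j]
      by (intro borel_measurable_times borel_measurable_diff g_X_measurable B_adapted) auto
  qed
  moreover have "(\<lambda>\<omega>. g (X k \<omega>) * (B s \<omega> - B (tk k) \<omega>)) \<in> borel_measurable (F s)"
    using k assms tk_nonneg by (intro borel_measurable_times borel_measurable_diff g_X_measurable B_adapted) auto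
  ultimately show ?thesis
    unfolding ito_on_step[OF k, abs_def] by (intro borel_measurable_add borel_measurable_sum) auto
qed

lemma ito_grid_moment:
  assumes r: "r \<ge> 1" and n: "n \<le> M"
    and ig: "\<And>k. k < n \<Longrightarrow> integrable P (\<lambda>\<omega>. g (X k \<omega>)^(2*r))"
  shows "integrable P (\<lambda>\<omega>. ito (tk n) \<omega>^(2*r)) \<and>
    expectation (\<lambda>\<omega>. ito (tk n) \<omega>^(2*r))
      \<le> (1 + ito_step_const r T * dt)^n * (ito_step_const r T * dt) * (\<Sum>k<n. expectation (\<lambda>\<omega>. g (X k \<omega>)^(2*r)))"
  using n ig
proof (induction n)
  case 0
  then show ?case using r by (simp add: ito_0 power_0_left)
next
  case (Suc n)
  let ?K = "ito_step_const r T * dt"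
  let ?\<gamma> = "\<lambda>k. expectation (\<lambda>\<omega>. g (X k \<omega>)^(2*r))"
  have IH: "integrable P (\<lambda>\<omega>. ito (tk n) \<omega>^(2*r))"
    "expectation (\<lambda>\<omega>. ito (tk n) \<omega>^(2*r)) \<le> (1 + ?K)^n * ?K * (\<Sum>k<n. ?\<gamma> k)"
    using Suc by auto
  have "n < M" using Suc by auto
  have step: "0 \<le> tk n" "tk n \<le> tk (Suc n)" "tk (Suc n) - tk n \<le> T"
    using tk_nonneg tk_Suc dt_le_T dt_pos by auto
  have ito_Suc: "ito (tk (Suc n)) \<omega> = ito (tk n) \<omega> + g (X n \<omega>) * (B (tk (Suc n)) \<omega> - B (tk n) \<omega>)" for \<omega>
    using ito_increment[OF \<open>n < M\<close> order_refl step(2) order_refl] .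
  have K_nonneg: "0 \<le> ?K" using ito_step_const_nonneg[of T r] T_pos dt_pos by simp
  have ito_meas: "ito (tk n) \<in> borel_measurable (F (tk n))" using ito_adapted tk_nonneg tk_le_T \<open>n < M\<close> by simp
  have g_meas: "(\<lambda>\<omega>. g (X n \<omega>)) \<in> borel_measurable (F (tk n))" using g_X_measurable \<open>n < M\<close> by simp
  note moment = increment_step_moment[OF step ito_meas g_meas IH(1) Suc.prems(2)[of n]]
  have "expectation (\<lambda>\<omega>. ito (tk (Suc n)) \<omega>^(2*r))
      \<le> expectation (\<lambda>\<omega>. ito (tk n) \<omega>^(2*r))
        + ito_step_const r T * (tk (Suc n) - tk n) * (expectation (\<lambda>\<omega>. ito (tk n) \<omega>^(2*r)) + ?\<gamma> n)"
    unfolding ito_Suc using moment(2) by simp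
  also have "\<dots> = (1 + ?K) * expectation (\<lambda>\<omega>. ito (tk n) \<omega>^(2*r)) + ?K * ?\<gamma> n"
    by (simp add: tk_Suc algebra_simps)
  also have "\<dots> \<le> (1 + ?K) * ((1 + ?K)^n * ?K * (\<Sum>k<n. ?\<gamma> k)) + (1 + ?K)^(Suc n) * ?K * ?\<gamma> n"
  proof (intro add_mono mult_left_mono IH(2))
    have "0 \<le> ?\<gamma> n" by (intro integral_nonneg_AE AE_I2) (simp add: zero_le_even_power)
    moreover have "1 \<le> (1 + ?K)^(Suc n)" using K_nonneg by (intro one_le_power) simp
    ultimately have "1 * (?K * ?\<gamma> n) \<le> (1 + ?K)^(Suc n) * (?K * ?\<gamma> n)"
      using K_nonneg by (intro mult_right_mono) auto
    then show "?K * ?\<gamma> n \<le> (1 + ?K)^(Suc n) * ?K * ?\<gamma> n" by (simp add: mult_ac)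
  qed (use K_nonneg in simp)
  also have "\<dots> = (1 + ?K)^(Suc n) * ?K * (\<Sum>k<Suc n. ?\<gamma> k)"
    by (simp add: algebra_simps)
  finally show ?case using moment(1) unfolding ito_Suc by simp
qed

lemma integrable_ito_power:
  assumes r: "r \<ge> 1" and n: "n \<le> M"
    and ig: "\<And>k. k < n \<Longrightarrow> integrable P (\<lambda>\<omega>. g (X k \<omega>)^(2*r))"
    and s: "0 \<le> s" "s \<le> tk n"
  shows "integrable P (\<lambda>\<omega>. ito s \<omega>^(2*r))"
proof -
  obtain k where k: "k < M" "tk k \<le> s" "s \<le> tk (Suc k)" "k < n \<or> s = 0"
    using grid_interval_exists[OF s n] by blast
  show ?thesis
  proof (cases "s = 0")
    case True
    then show ?thesis using r by (simp add: ito_0 power_0_left)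
  next
    case False
    then have "k < n" using k by auto
    have step: "0 \<le> tk k" "tk k \<le> s" "s - tk k \<le> T" using tk_nonneg k tk_Suc dt_le_T dt_pos by auto
    have "ito s \<omega> = ito (tk k) \<omega> + g (X k \<omega>) * (B s \<omega> - B (tk k) \<omega>)" for \<omega>
      using ito_increment[OF k(1) order_refl k(2) k(3)] .
    moreover have "integrable P (\<lambda>\<omega>. ito (tk k) \<omega>^(2*r))"
      using ito_grid_moment[OF r, of k] ig \<open>k < n\<close> n by auto
    moreover have "ito (tk k) \<in> borel_measurable (F (tk k))"
      using ito_adapted tk_nonneg tk_le_T k by simp
    moreover have "(\<lambda>\<omega>. g (X k \<omega>)) \<in> borel_measurable (F (tk k))"
      using g_X_measurable k by simp
    ultimately show ?thesis
      using increment_step_moment(1)[OF step _ _ _ ig[OF \<open>k < n\<close>]] by simp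
  qed
qed

definition dyadic :: "nat \<Rightarrow> nat \<Rightarrow> real" where "dyadic l i = real i * (dt / 2^l)"

definition dyadic_max :: "nat \<Rightarrow> nat \<Rightarrow> nat \<Rightarrow> 'w \<Rightarrow> real" where
  "dyadic_max r n l \<omega> = (Max ((\<lambda>i. \<bar>ito (dyadic l i) \<omega>\<bar>^r) ` {..n * 2^l}))^2"

text \<open>The supremum of \<open>ito\<^sup>2\<^sup>r\<close> over \<open>[0, t\<^sub>n]\<close>, written as the increasing limit of the maxima
  over dyadic refinements of the grid so that monotone convergence applies.\<close>

definition ito_sup :: "nat \<Rightarrow> nat \<Rightarrow> 'w \<Rightarrow> real" where
  "ito_sup r n \<omega> = enn2real (SUP l. ennreal (dyadic_max r n l \<omega>))"

lemma dyadic_nonneg: "0 \<le> dyadic l i" unfolding dyadic_def using dt_pos by simp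

lemma tk_eq_dyadic: "tk k = dyadic l (k * 2^l)" unfolding dyadic_def tk_def by simp

lemma dyadic_mono: "i \<le> j \<Longrightarrow> dyadic l i \<le> dyadic l j"
  unfolding dyadic_def using dt_pos by (intro mult_right_mono) auto

lemma dyadic_le_tk: "i \<le> n * 2^l \<Longrightarrow> dyadic l i \<le> tk n"
  unfolding tk_eq_dyadic[of n l] by (rule dyadic_mono)

lemma dyadic_in_step:
  assumes "i < n * 2^l"
  shows "i div 2^l < n" "tk (i div 2^l) \<le> dyadic l i" "dyadic l (Suc i) \<le> tk (Suc (i div 2^l))"
proof -
  let ?k = "i div 2^l"
  show "?k < n" using assms by (simp add: less_mult_imp_div_less)
  have "?k * 2^l \<le> i" by (rule div_times_less_eq_dividend)
  then show "tk ?k \<le> dyadic l i" unfolding tk_eq_dyadic[of ?k l] by (rule dyadic_mono)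
  have "i = ?k * 2^l + i mod 2^l" by (rule div_mult_mod_eq[symmetric])
  moreover have "i mod 2^l < 2^l" by simp
  moreover have "Suc ?k * 2^l = ?k * 2^l + 2^l" by simp
  ultimately have "Suc i \<le> Suc ?k * 2^l" by linarith
  then show "dyadic l (Suc i) \<le> tk (Suc ?k)" unfolding tk_eq_dyadic[of "Suc ?k" l] by (rule dyadic_mono)
qed

lemma dyadic_max_doob:
  assumes r: "r \<ge> 1" and n: "n \<le> M" and ig: "\<And>k. k < n \<Longrightarrow> integrable P (\<lambda>\<omega>. g (X k \<omega>)^(2*r))"
  shows "integrable P (dyadic_max r n l)"
    "expectation (dyadic_max r n l) \<le> 4 * expectation (\<lambda>\<omega>. ito (tk n) \<omega>^(2*r))"
proof -
  have le_T: "dyadic l i \<le> T" if "i \<le> n * 2^l" for i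
    using dyadic_le_tk[OF that] tk_le_T[OF n] by simp
  have step_M: "i div 2^l < M" if "i < n * 2^l" for i using dyadic_in_step(1)[OF that] n by simp
  note doob = doob_discrete[where Y="\<lambda>i. ito (dyadic l i)" and G="\<lambda>i \<omega>. g (X (i div 2^l) \<omega>)"
      and \<sigma>="dyadic l" and n="n * 2^l", OF r dyadic_nonneg dyadic_mono[OF le_SucI[OF order_refl]]
      ito_adapted[OF dyadic_nonneg le_T]
      g_X_measurable[OF less_imp_le[OF step_M] dyadic_in_step(2)]
      ito_increment[OF step_M dyadic_in_step(2) dyadic_mono[OF le_SucI[OF order_refl]] dyadic_in_step(3)]
      integrable_ito_power[OF r n ig dyadic_nonneg dyadic_le_tk]
      ig[OF dyadic_in_step(1)]]
  show "integrable P (dyadic_max r n l)" using doob(1) unfolding dyadic_max_def[abs_def] .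
  show "expectation (dyadic_max r n l) \<le> 4 * expectation (\<lambda>\<omega>. ito (tk n) \<omega>^(2*r))"
    using doob(2) unfolding dyadic_max_def[abs_def] tk_eq_dyadic[of n l] .
qed

lemma dyadic_max_nonneg: "0 \<le> dyadic_max r n l \<omega>" unfolding dyadic_max_def by simp

lemma dyadic_max_ge: "i \<le> n * 2^l \<Longrightarrow> ito (dyadic l i) \<omega>^(2*r) \<le> dyadic_max r n l \<omega>"
proof -
  assume i: "i \<le> n * 2^l"
  have "\<bar>ito (dyadic l i) \<omega>\<bar>^r \<le> Max ((\<lambda>i. \<bar>ito (dyadic l i) \<omega>\<bar>^r) ` {..n * 2^l})"
    using i by (intro Max_ge) auto
  then have "(\<bar>ito (dyadic l i) \<omega>\<bar>^r)^2 \<le> dyadic_max r n l \<omega>"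
    unfolding dyadic_max_def by (intro power_mono) auto
  then show ?thesis by (simp only: abs_power_square)
qed

lemma dyadic_max_le:
  assumes "\<And>i. i \<le> n * 2^l \<Longrightarrow> \<bar>ito (dyadic l i) \<omega>\<bar>^r \<le> C"
  shows "dyadic_max r n l \<omega> \<le> C^2"
proof -
  let ?A = "(\<lambda>i. \<bar>ito (dyadic l i) \<omega>\<bar>^r) ` {..n * 2^l}"
  have "\<bar>ito (dyadic l 0) \<omega>\<bar>^r \<le> Max ?A" by (intro Max_ge) auto
  then have "0 \<le> Max ?A" by (rule order_trans[rotated]) simp
  moreover have "Max ?A \<le> C" using assms by (intro Max.boundedI) auto
  ultimately show ?thesis unfolding dyadic_max_def by (intro power_mono) auto
qed

lemma dyadic_max_mono: "dyadic_max r n l \<omega> \<le> dyadic_max r n (Suc l) \<omega>"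
proof -
  have "dyadic_max r n l \<omega> \<le> (sqrt (dyadic_max r n (Suc l) \<omega>))^2"
  proof (rule dyadic_max_le)
    fix i assume "i \<le> n * 2^l"
    then have "ito (dyadic (Suc l) (2*i)) \<omega>^(2*r) \<le> dyadic_max r n (Suc l) \<omega>"
      by (intro dyadic_max_ge) simp
    moreover have "dyadic (Suc l) (2*i) = dyadic l i" unfolding dyadic_def by simp
    ultimately show "\<bar>ito (dyadic l i) \<omega>\<bar>^r \<le> sqrt (dyadic_max r n (Suc l) \<omega>)"
      by (metis abs_power_square real_le_rsqrt)
  qed
  then show ?thesis using dyadic_max_nonneg by simp
qed

lemma dyadic_max_SUP_finite:
  assumes "\<omega> \<in> space P" "n \<le> M"
  shows "(SUP l. ennreal (dyadic_max r n l \<omega>)) < \<infinity>"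
proof -
  have "compact ((\<lambda>s. ito s \<omega>) ` {0..T})" by (intro compact_continuous_image ito_continuous assms) simp
  then have "bounded ((\<lambda>s. ito s \<omega>) ` {0..T})" by (rule compact_imp_bounded)
  then obtain R where R: "\<forall>s\<in>{0..T}. \<bar>ito s \<omega>\<bar> \<le> R" unfolding bounded_iff by auto
  have "dyadic_max r n l \<omega> \<le> (R^r)^2" for l
  proof (rule dyadic_max_le)
    fix i assume "i \<le> n * 2^l"
    then have "dyadic l i \<in> {0..T}" using dyadic_nonneg[of l i] dyadic_le_tk tk_le_T[OF assms(2)] by force
    then show "\<bar>ito (dyadic l i) \<omega>\<bar>^r \<le> R^r" using R by (auto intro: power_mono)
  qed
  then have "(SUP l. ennreal (dyadic_max r n l \<omega>)) \<le> ennreal ((R^r)^2)" by (intro SUP_least ennreal_leI)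
  then show ?thesis using order.strict_trans1 by fastforce
qed

lemma dyadic_approximation:
  assumes "0 \<le> s"
  defines "i l \<equiv> nat \<lfloor>s * 2^l / dt\<rfloor>"
  shows "dyadic l (i l) \<le> s" "s \<le> tk n \<Longrightarrow> i l \<le> n * 2^l" "(\<lambda>l. dyadic l (i l)) \<longlonglongrightarrow> s"
proof -
  define y where "y l = s * 2^l / dt" for l :: nat
  have y_nonneg: "0 \<le> y l" for l unfolding y_def using assms dt_pos by simp
  have floor: "real (i l) \<le> y l" "y l < real (i l) + 1" for l
    unfolding i_def y_def[symmetric] using y_nonneg[of l] by linarith+
  have dyadic_eq: "dyadic l (i l) = real (i l) * (dt / 2^l)" for l unfolding dyadic_def ..
  show le: "dyadic l (i l) \<le> s" for l
  proof -
    have "dyadic l (i l) \<le> y l * (dt / 2^l)"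
      unfolding dyadic_eq using floor dt_pos by (intro mult_right_mono) auto
    also have "\<dots> = s" unfolding y_def using dt_pos by simp
    finally show ?thesis .
  qed
  have ge: "s - dt * inverse (2^l) \<le> dyadic l (i l)" for l
  proof -
    have "y l - 1 \<le> real (i l)" using floor(2)[of l] by linarith
    then have "(y l - 1) * (dt / 2^l) \<le> dyadic l (i l)"
      unfolding dyadic_eq using dt_pos by (intro mult_right_mono) auto
    moreover have "(y l - 1) * (dt / 2^l) = s - dt * inverse (2^l)"
      unfolding y_def using dt_pos by (simp add: field_simps)
    ultimately show ?thesis by simp
  qed
  show "i l \<le> n * 2^l" if "s \<le> tk n"
  proof -
    have "y l \<le> real n * 2^l" unfolding y_def using that dt_pos unfolding tk_def by (simp add: field_simps)
    then have "real (i l) \<le> real (n * 2^l)" using floor(1)[of l] by simp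
    then show ?thesis by (simp only: of_nat_le_iff)
  qed
  have "(\<lambda>l. s - dt * inverse (2^l)) \<longlonglongrightarrow> s - dt * 0"
    by (intro tendsto_diff tendsto_const tendsto_mult LIMSEQ_inverse_realpow_zero) simp
  then have lower: "(\<lambda>l. s - dt * inverse (2^l)) \<longlonglongrightarrow> s" by simp
  show "(\<lambda>l. dyadic l (i l)) \<longlonglongrightarrow> s"
    by (rule tendsto_sandwich[OF always_eventually always_eventually lower tendsto_const]) (use ge le in auto)
qed

lemma ito_power_le_ito_sup:
  assumes \<omega>: "\<omega> \<in> space P" and n: "n \<le> M" and s: "0 \<le> s" "s \<le> tk n"
  shows "ito s \<omega>^(2*r) \<le> ito_sup r n \<omega>"
proof -
  define u where "u l = dyadic l (nat \<lfloor>s * 2^l / dt\<rfloor>)" for l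
  note approx = dyadic_approximation[OF s(1), folded u_def]
  have "u l \<in> {0..T}" for l
    using dyadic_nonneg approx(1)[of l] s tk_le_T[OF n] unfolding u_def by auto
  moreover have "s \<in> {0..T}" using s tk_le_T[OF n] by auto
  ultimately have "(\<lambda>l. ito (u l) \<omega>) \<longlonglongrightarrow> ito s \<omega>"
    by (intro continuous_on_tendsto_compose[OF ito_continuous[OF \<omega>] approx(3)]) auto
  then have lim: "(\<lambda>l. ennreal (ito (u l) \<omega>^(2*r))) \<longlonglongrightarrow> ennreal (ito s \<omega>^(2*r))"
    by (intro tendsto_ennrealI tendsto_power)
  have "ennreal (ito (u l) \<omega>^(2*r)) \<le> (SUP l. ennreal (dyadic_max r n l \<omega>))" for l
  proof -
    have "ito (u l) \<omega>^(2*r) \<le> dyadic_max r n l \<omega>"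
      unfolding u_def using approx(2)[OF s(2)] by (rule dyadic_max_ge)
    then have "ennreal (ito (u l) \<omega>^(2*r)) \<le> ennreal (dyadic_max r n l \<omega>)" by (rule ennreal_leI)
    also have "\<dots> \<le> (SUP l. ennreal (dyadic_max r n l \<omega>))" by (rule SUP_upper) simp
    finally show ?thesis .
  qed
  then have "ennreal (ito s \<omega>^(2*r)) \<le> (SUP l. ennreal (dyadic_max r n l \<omega>))"
    by (intro LIMSEQ_le_const2[OF lim]) auto
  then have "enn2real (ennreal (ito s \<omega>^(2*r))) \<le> ito_sup r n \<omega>"
    unfolding ito_sup_def using dyadic_max_SUP_finite[OF \<omega> n] by (intro enn2real_mono) auto
  then show ?thesis by (simp add: zero_le_even_power)
qed

lemma ito_sup_nonneg: "0 \<le> ito_sup r n \<omega>" unfolding ito_sup_def by simp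

lemma ito_sup_doob:
  assumes r: "r \<ge> 1" and n: "n \<le> M" and ig: "\<And>k. k < n \<Longrightarrow> integrable P (\<lambda>\<omega>. g (X k \<omega>)^(2*r))"
  shows "integrable P (ito_sup r n)" "expectation (ito_sup r n) \<le> 4 * expectation (\<lambda>\<omega>. ito (tk n) \<omega>^(2*r))"
proof -
  let ?C = "4 * expectation (\<lambda>\<omega>. ito (tk n) \<omega>^(2*r))"
  note doob = dyadic_max_doob[OF r n ig]
  have max_meas: "(\<lambda>\<omega>. ennreal (dyadic_max r n l \<omega>)) \<in> borel_measurable P" for l
    using borel_measurable_integrable[OF doob(1)] by measurable
  then have sup_meas: "ito_sup r n \<in> borel_measurable P"
    unfolding ito_sup_def[abs_def] by measurable
  have "(\<integral>\<^sup>+\<omega>. ennreal (ito_sup r n \<omega>) \<partial>P) = (\<integral>\<^sup>+\<omega>. (SUP l. ennreal (dyadic_max r n l \<omega>)) \<partial>P)"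
    unfolding ito_sup_def using dyadic_max_SUP_finite[OF _ n] by (intro nn_integral_cong) simp
  also have "\<dots> = (SUP l. (\<integral>\<^sup>+\<omega>. ennreal (dyadic_max r n l \<omega>) \<partial>P))"
    by (intro nn_integral_monotone_convergence_SUP[OF _ max_meas] incseq_SucI le_funI ennreal_leI dyadic_max_mono)
  also have "\<dots> \<le> ennreal ?C"
  proof (rule SUP_least)
    fix l
    have "(\<integral>\<^sup>+\<omega>. ennreal (dyadic_max r n l \<omega>) \<partial>P) = ennreal (expectation (dyadic_max r n l))"
      by (intro nn_integral_eq_integral doob(1) AE_I2 dyadic_max_nonneg)
    then show "(\<integral>\<^sup>+\<omega>. ennreal (dyadic_max r n l \<omega>) \<partial>P) \<le> ennreal ?C"
      using doob(2) by (simp add: ennreal_leI)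
  qed
  finally have nn_le: "(\<integral>\<^sup>+\<omega>. ennreal (ito_sup r n \<omega>) \<partial>P) \<le> ennreal ?C" .
  show int: "integrable P (ito_sup r n)"
    unfolding integrable_iff_bounded using sup_meas nn_le
    by (auto simp: ito_sup_nonneg order.strict_trans1)
  have "ennreal (expectation (ito_sup r n)) \<le> ennreal ?C"
    using nn_le nn_integral_eq_integral[OF int] by (simp add: ito_sup_nonneg)
  moreover have "0 \<le> ?C" by (simp add: integral_nonneg_AE zero_le_even_power)
  ultimately show "expectation (ito_sup r n) \<le> ?C" by (simp add: ennreal_le_iff)
qed

end

section \<open>Moment bounds\<close>

definition drift_moment_const :: "nat \<Rightarrow> real \<Rightarrow> real" where
  "drift_moment_const r T = T^(2*r-1) * 2^(2*r)"

definition ito_moment_const :: "nat \<Rightarrow> real \<Rightarrow> real" where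
  "ito_moment_const r T = 4 * exp (ito_step_const r T * T) * ito_step_const r T * 2^(2*r)"

definition gronwall_offset :: "nat \<Rightarrow> real \<Rightarrow> real \<Rightarrow> real \<Rightarrow> real \<Rightarrow> real \<Rightarrow> real" where
  "gronwall_offset r T a x0 Af Ag = 3^(2*r) * ((\<bar>a\<bar> + 1 + \<bar>x0\<bar>)^(2*r)
     + 2^(2*r) * drift_moment_const r T * T * Af^(2*r) + 2^(2*r) * ito_moment_const r T * T * Ag^(2*r))"

definition gronwall_rate :: "nat \<Rightarrow> real \<Rightarrow> real \<Rightarrow> real \<Rightarrow> real" where
  "gronwall_rate r T Lf Lg = 3^(2*r) * 2^(2*r) * (drift_moment_const r T * Lf^(2*r) + ito_moment_const r T * Lg^(2*r))"

definition moment_const :: "nat \<Rightarrow> real \<Rightarrow> real \<Rightarrow> real \<Rightarrow> real \<Rightarrow> real \<Rightarrow> real \<Rightarrow> real \<Rightarrow> real" where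
  "moment_const r T a x0 Af Lf Ag Lg =
     1 + gronwall_offset r T a x0 Af Ag * (1 + gronwall_rate r T Lf Lg * T * exp (gronwall_rate r T Lf Lg * T))"

lemma gronwall_offset_nonneg: "0 \<le> T \<Longrightarrow> 0 \<le> Af \<Longrightarrow> 0 \<le> Ag \<Longrightarrow> 0 \<le> gronwall_offset r T a x0 Af Ag"
  using ito_step_const_nonneg[of T r]
  unfolding gronwall_offset_def drift_moment_const_def ito_moment_const_def by (simp add: zero_le_even_power)

lemma gronwall_rate_nonneg: "0 \<le> T \<Longrightarrow> 0 \<le> gronwall_rate r T Lf Lg"
  using ito_step_const_nonneg[of T r]
  unfolding gronwall_rate_def drift_moment_const_def ito_moment_const_def by (simp add: zero_le_even_power)

context abep_half_line
begin

definition drift_sum_pow :: "nat \<Rightarrow> nat \<Rightarrow> 'w \<Rightarrow> real" where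
  "drift_sum_pow r n \<omega> = (dt * (\<Sum>j<n. \<bar>f (X j \<omega>)\<bar>))^(2*r)"

definition majorant :: "nat \<Rightarrow> nat \<Rightarrow> 'w \<Rightarrow> real" where
  "majorant r n \<omega> =
  3^(2*r) * ((\<bar>a\<bar> + 1 + \<bar>x0\<bar>)^(2*r) + 2^(2*r) * drift_sum_pow r n \<omega> + 2^(2*r) * ito_sup r n \<omega>)"

lemma majorant_nonneg: "0 \<le> majorant r n \<omega>"
  unfolding majorant_def drift_sum_pow_def using ito_sup_nonneg[of r n \<omega>] by (simp add: zero_le_even_power)

lemma xi_power_le_majorant:
  assumes \<omega>: "\<omega> \<in> space P" and n: "n \<le> M" and t: "0 \<le> t" "t \<le> tk n" and r: "r \<ge> 1"
  shows "\<xi> t \<omega>^(2*r) \<le> majorant r n \<omega>"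
proof -
  define \<rho> where "\<rho> = root (2*r) (ito_sup r n \<omega>)"
  have \<rho>_nonneg: "0 \<le> \<rho>" unfolding \<rho>_def using ito_sup_nonneg by (simp add: real_root_ge_zero)
  have \<rho>_pow: "\<rho>^(2*r) = ito_sup r n \<omega>" unfolding \<rho>_def using r ito_sup_nonneg by simp
  have "\<bar>ito s \<omega>\<bar> \<le> \<rho>" if "s \<in> {0..tk n}" for s
  proof -
    have "\<bar>ito s \<omega>\<bar>^(2*r) \<le> \<rho>^(2*r)"
      using ito_power_le_ito_sup[OF \<omega> n] that unfolding \<rho>_pow power_abs_two_mult by auto
    then have "\<bar>ito s \<omega>\<bar>^Suc (2*r - 1) \<le> \<rho>^Suc (2*r - 1)" using r by simp
    then show ?thesis using \<rho>_nonneg by (rule power_le_imp_le_base)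
  qed
  then have "\<bar>\<xi> t \<omega>\<bar> \<le> \<bar>a\<bar> + 1 + \<bar>x0\<bar> + 2 * (dt * (\<Sum>j<n. \<bar>f (X j \<omega>)\<bar>)) + 2 * \<rho>"
    using xi_abs_le_pathwise[OF \<omega> n t] by force
  then have "\<bar>\<xi> t \<omega>\<bar>^(2*r) \<le> (\<bar>a\<bar> + 1 + \<bar>x0\<bar> + 2 * (dt * (\<Sum>j<n. \<bar>f (X j \<omega>)\<bar>)) + 2 * \<rho>)^(2*r)"
    by (intro power_mono) auto
  also have "\<dots> \<le> 3^(2*r) * ((\<bar>a\<bar> + 1 + \<bar>x0\<bar>)^(2*r) + (2 * (dt * (\<Sum>j<n. \<bar>f (X j \<omega>)\<bar>)))^(2*r) + (2 * \<rho>)^(2*r))"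
    using dt_pos \<rho>_nonneg by (intro power_add3_le_three_power) (auto simp: sum_nonneg)
  also have "\<dots> = majorant r n \<omega>"
    unfolding majorant_def drift_sum_pow_def by (simp add: power_mult_distrib \<rho>_pow)
  finally show ?thesis by (simp only: power_abs_two_mult)
qed

lemma growth_power_le:
  assumes \<omega>: "\<omega> \<in> space P" and k: "k \<le> M"
  shows "f (X k \<omega>)^(2*r) \<le> 2^(2*r) * (Af^(2*r) + Lf^(2*r) * X k \<omega>^(2*r))"
    "g (X k \<omega>)^(2*r) \<le> 2^(2*r) * (Ag^(2*r) + Lg^(2*r) * X k \<omega>^(2*r))"
proof -
  have ge: "a + 1 / real N \<le> X k \<omega>" using X_ge_barrier[OF \<omega> k] unfolding barrier_def .
  have "\<bar>f (X k \<omega>)\<bar>^(2*r) \<le> (Af + Lf * \<bar>X k \<omega>\<bar>)^(2*r)" using f_growth[OF ge] by (intro power_mono) auto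
  also have "\<dots> \<le> 2^(2*r) * (Af^(2*r) + (Lf * \<bar>X k \<omega>\<bar>)^(2*r))" using Af Lf by (intro power_add_le_two_power) auto
  finally show "f (X k \<omega>)^(2*r) \<le> 2^(2*r) * (Af^(2*r) + Lf^(2*r) * X k \<omega>^(2*r))"
    by (simp add: power_abs_two_mult power_mult_distrib)
  have "\<bar>g (X k \<omega>)\<bar>^(2*r) \<le> (Ag + Lg * \<bar>X k \<omega>\<bar>)^(2*r)" using g_growth[OF ge] by (intro power_mono) auto
  also have "\<dots> \<le> 2^(2*r) * (Ag^(2*r) + (Lg * \<bar>X k \<omega>\<bar>)^(2*r))" using Ag Lg by (intro power_add_le_two_power) auto
  finally show "g (X k \<omega>)^(2*r) \<le> 2^(2*r) * (Ag^(2*r) + Lg^(2*r) * X k \<omega>^(2*r))"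
    by (simp add: power_abs_two_mult power_mult_distrib)
qed

lemma X_measurable_P: "k \<le> M \<Longrightarrow> X k \<in> borel_measurable P"
  using X_measurable[OF _ order_refl] measurable_filtration_P[OF tk_nonneg] by blast

lemma g_X_moment_le:
  assumes k: "k \<le> M" and iX: "integrable P (\<lambda>\<omega>. X k \<omega>^(2*r))"
  shows "integrable P (\<lambda>\<omega>. g (X k \<omega>)^(2*r))"
    "expectation (\<lambda>\<omega>. g (X k \<omega>)^(2*r)) \<le> 2^(2*r) * (Ag^(2*r) + Lg^(2*r) * expectation (\<lambda>\<omega>. X k \<omega>^(2*r)))"
proof -
  have ib: "integrable P (\<lambda>\<omega>. 2^(2*r) * (Ag^(2*r) + Lg^(2*r) * X k \<omega>^(2*r)))" using iX by simp
  show ig: "integrable P (\<lambda>\<omega>. g (X k \<omega>)^(2*r))"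
  proof (rule integrable_dominated[OF ib])
    show "(\<lambda>\<omega>. g (X k \<omega>)^(2*r)) \<in> borel_measurable P"
      using measurable_filtration_P[OF tk_nonneg g_X_measurable[OF k order_refl]] by (rule borel_measurable_power)
    fix \<omega> assume "\<omega> \<in> space P"
    then show "\<bar>g (X k \<omega>)^(2*r)\<bar> \<le> 2^(2*r) * (Ag^(2*r) + Lg^(2*r) * X k \<omega>^(2*r))"
      using growth_power_le(2)[OF _ k, of \<omega> r] by (simp add: zero_le_even_power)
  qed
  have "expectation (\<lambda>\<omega>. g (X k \<omega>)^(2*r)) \<le> expectation (\<lambda>\<omega>. 2^(2*r) * (Ag^(2*r) + Lg^(2*r) * X k \<omega>^(2*r)))"
    using growth_power_le(2)[OF _ k] by (intro integral_mono[OF ig ib])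
  also have "\<dots> = 2^(2*r) * (Ag^(2*r) + Lg^(2*r) * expectation (\<lambda>\<omega>. X k \<omega>^(2*r)))"
    using iX by (simp add: prob_space)
  finally show "expectation (\<lambda>\<omega>. g (X k \<omega>)^(2*r)) \<le> 2^(2*r) * (Ag^(2*r) + Lg^(2*r) * expectation (\<lambda>\<omega>. X k \<omega>^(2*r)))" .
qed

lemma drift_sum_pow_le:
  assumes n: "n \<le> M" and r: "r \<ge> 1"
  shows "drift_sum_pow r n \<omega> \<le> T^(2*r-1) * dt * (\<Sum>j<n. f (X j \<omega>)^(2*r))"
proof -
  have "drift_sum_pow r n \<omega> = (\<Sum>j<n. dt * \<bar>f (X j \<omega>)\<bar>)^(2*r)"
    unfolding drift_sum_pow_def by (simp add: sum_distrib_left)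
  also have "\<dots> \<le> real n^(2*r-1) * (\<Sum>j<n. (dt * \<bar>f (X j \<omega>)\<bar>)^(2*r))"
    by (rule sum_even_power_le) (use r in auto)
  also have "\<dots> = (real n * dt)^(2*r-1) * dt * (\<Sum>j<n. f (X j \<omega>)^(2*r))"
  proof -
    have "(\<Sum>j<n. (dt * \<bar>f (X j \<omega>)\<bar>)^(2*r)) = dt^(2*r) * (\<Sum>j<n. f (X j \<omega>)^(2*r))"
      by (simp add: power_mult_distrib power_abs_two_mult sum_distrib_left)
    moreover have "dt^(2*r) = dt^(2*r-1) * dt" using r by (simp add: power_Suc2[symmetric])
    ultimately show ?thesis by (simp add: power_mult_distrib)
  qed
  also have "\<dots> \<le> T^(2*r-1) * dt * (\<Sum>j<n. f (X j \<omega>)^(2*r))"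
    using n_dt_le_T[OF n] dt_pos
    by (intro mult_right_mono power_mono) (auto simp: sum_nonneg zero_le_even_power)
  finally show ?thesis .
qed

lemma one_add_power_le_exp:
  assumes "0 \<le> c" "n \<le> M"
  shows "(1 + c * dt)^n \<le> exp (c * T)"
proof -
  have "(1 + c * dt)^n \<le> (exp (c * dt))^n" using assms dt_pos by (intro power_mono) auto
  also have "\<dots> = exp (c * (real n * dt))" by (simp add: exp_of_nat_mult[symmetric] mult_ac)
  also have "\<dots> \<le> exp (c * T)" using assms n_dt_le_T[OF assms(2)] by (simp add: mult_left_mono)
  finally show ?thesis .
qed

lemma expectation_drift_sum_pow_le:
  assumes n: "n \<le> M" and r: "r \<ge> 1" and iX: "\<And>k. k < n \<Longrightarrow> integrable P (\<lambda>\<omega>. X k \<omega>^(2*r))"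
  shows "integrable P (drift_sum_pow r n)"
    "expectation (drift_sum_pow r n)
      \<le> drift_moment_const r T * (T * Af^(2*r) + Lf^(2*r) * dt * (\<Sum>k<n. expectation (\<lambda>\<omega>. X k \<omega>^(2*r))))"
proof -
  let ?q = "2*r"
  define S where "S = (\<Sum>k<n. expectation (\<lambda>\<omega>. X k \<omega>^?q))"
  define u where "u \<omega> = T^(?q-1) * dt * (\<Sum>j<n. 2^?q * (Af^?q + Lf^?q * X j \<omega>^?q))" for \<omega>
  have iu: "integrable P u" unfolding u_def using iX
    by (intro integrable_mult_right Bochner_Integration.integrable_sum Bochner_Integration.integrable_add) auto
  have meas: "drift_sum_pow r n \<in> borel_measurable P"
  proof -
    have "(\<lambda>\<omega>. f (X j \<omega>)) \<in> borel_measurable P" if "j < n" for j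
      using measurable_filtration_P[OF tk_nonneg f_X_measurable[OF _ order_refl]] that n by simp
    then show ?thesis unfolding drift_sum_pow_def[abs_def] by measurable
  qed
  have le_u: "drift_sum_pow r n \<omega> \<le> u \<omega>" if "\<omega> \<in> space P" for \<omega>
  proof -
    have "drift_sum_pow r n \<omega> \<le> T^(?q-1) * dt * (\<Sum>j<n. f (X j \<omega>)^?q)" by (rule drift_sum_pow_le[OF n r])
    also have "\<dots> \<le> u \<omega>" unfolding u_def using T_pos dt_pos n
      by (intro mult_left_mono sum_mono growth_power_le(1)[OF that]) auto
    finally show ?thesis .
  qed
  have nonneg: "0 \<le> drift_sum_pow r n \<omega>" for \<omega>
    unfolding drift_sum_pow_def using dt_pos by (simp add: zero_le_even_power)
  show int: "integrable P (drift_sum_pow r n)" by (rule integrable_dominated[OF iu meas]) (use le_u nonneg in auto)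
  have "expectation (drift_sum_pow r n) \<le> expectation u" by (rule integral_mono[OF int iu le_u])
  also have "\<dots> = T^(?q-1) * dt * (\<Sum>j<n. 2^?q * (Af^?q + Lf^?q * expectation (\<lambda>\<omega>. X j \<omega>^?q)))"
    unfolding u_def using iX by (simp add: prob_space Bochner_Integration.integral_sum)
  also have "\<dots> = T^(?q-1) * 2^?q * (real n * dt * Af^?q + Lf^?q * dt * S)"
    unfolding S_def by (simp add: sum.distrib sum_distrib_left sum_distrib_right algebra_simps)
  also have "\<dots> \<le> drift_moment_const r T * (T * Af^?q + Lf^?q * dt * S)"
    unfolding drift_moment_const_def using n_dt_le_T[OF n] Af T_pos
    by (intro mult_left_mono add_right_mono mult_right_mono) auto
  finally show "expectation (drift_sum_pow r n) \<le> drift_moment_const r T * (T * Af^?q + Lf^?q * dt * S)" .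
qed

lemma expectation_ito_sup_le:
  assumes n: "n \<le> M" and r: "r \<ge> 1" and iX: "\<And>k. k < n \<Longrightarrow> integrable P (\<lambda>\<omega>. X k \<omega>^(2*r))"
  shows "integrable P (ito_sup r n)"
    "expectation (ito_sup r n)
      \<le> ito_moment_const r T * (T * Ag^(2*r) + Lg^(2*r) * dt * (\<Sum>k<n. expectation (\<lambda>\<omega>. X k \<omega>^(2*r))))"
proof -
  let ?q = "2*r" and ?K = "ito_step_const r T"
  define S where "S = (\<Sum>k<n. expectation (\<lambda>\<omega>. X k \<omega>^?q))"
  have ig: "integrable P (\<lambda>\<omega>. g (X k \<omega>)^?q)" if "k < n" for k
    using g_X_moment_le(1) that n iX by simp
  note doob = ito_sup_doob[OF r n ig]
  show "integrable P (ito_sup r n)" using doob(1) .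
  have K_nonneg: "0 \<le> ?K" using ito_step_const_nonneg T_pos by simp
  have "expectation (ito_sup r n) \<le> 4 * expectation (\<lambda>\<omega>. ito (tk n) \<omega>^?q)" using doob(2) .
  also have "expectation (\<lambda>\<omega>. ito (tk n) \<omega>^?q)
      \<le> (1 + ?K * dt)^n * (?K * dt) * (\<Sum>k<n. expectation (\<lambda>\<omega>. g (X k \<omega>)^?q))"
    using ito_grid_moment[OF r n ig] by blast
  also have "\<dots> \<le> exp (?K * T) * (?K * dt) * (\<Sum>k<n. 2^?q * (Ag^?q + Lg^?q * expectation (\<lambda>\<omega>. X k \<omega>^?q)))"
  proof (intro mult_mono)
    show "(1 + ?K * dt)^n \<le> exp (?K * T)" by (rule one_add_power_le_exp[OF K_nonneg n])
    show "(\<Sum>k<n. expectation (\<lambda>\<omega>. g (X k \<omega>)^?q))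
      \<le> (\<Sum>k<n. 2^?q * (Ag^?q + Lg^?q * expectation (\<lambda>\<omega>. X k \<omega>^?q)))"
      using n iX by (intro sum_mono g_X_moment_le(2)) auto
    show "0 \<le> (\<Sum>k<n. expectation (\<lambda>\<omega>. g (X k \<omega>)^?q))"
      by (intro sum_nonneg integral_nonneg_AE AE_I2) (simp add: zero_le_even_power)
  qed (use K_nonneg dt_pos in auto)
  also have "\<dots> = exp (?K * T) * ?K * 2^?q * (real n * dt * Ag^?q + Lg^?q * dt * S)"
    unfolding S_def by (simp add: sum.distrib sum_distrib_left sum_distrib_right algebra_simps)
  also have "\<dots> \<le> exp (?K * T) * ?K * 2^?q * (T * Ag^?q + Lg^?q * dt * S)"
    using n_dt_le_T[OF n] Ag K_nonneg by (intro mult_left_mono add_right_mono mult_right_mono) auto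
  finally show "expectation (ito_sup r n) \<le> ito_moment_const r T * (T * Ag^?q + Lg^?q * dt * S)"
    unfolding ito_moment_const_def by (simp add: mult_ac)
qed

lemma majorant_expectation_le:
  assumes n: "n \<le> M" and r: "r \<ge> 1" and iX: "\<And>k. k < n \<Longrightarrow> integrable P (\<lambda>\<omega>. X k \<omega>^(2*r))"
  shows "integrable P (majorant r n)"
    "expectation (majorant r n)
      \<le> gronwall_offset r T a x0 Af Ag + gronwall_rate r T Lf Lg * dt * (\<Sum>k<n. expectation (\<lambda>\<omega>. X k \<omega>^(2*r)))"
proof -
  let ?q = "2*r"
  define S where "S = (\<Sum>k<n. expectation (\<lambda>\<omega>. X k \<omega>^?q))"
  note drift = expectation_drift_sum_pow_le[OF n r iX, folded S_def]
  note ito = expectation_ito_sup_le[OF n r iX, folded S_def]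
  show "integrable P (majorant r n)" unfolding majorant_def[abs_def] using drift(1) ito(1) by simp
  have "expectation (majorant r n)
      = 3^?q * ((\<bar>a\<bar> + 1 + \<bar>x0\<bar>)^?q + 2^?q * expectation (drift_sum_pow r n) + 2^?q * expectation (ito_sup r n))"
    unfolding majorant_def[abs_def] using drift(1) ito(1) by (simp add: prob_space)
  also have "\<dots> \<le> 3^?q * ((\<bar>a\<bar> + 1 + \<bar>x0\<bar>)^?q
      + 2^?q * (drift_moment_const r T * (T * Af^?q + Lf^?q * dt * S))
      + 2^?q * (ito_moment_const r T * (T * Ag^?q + Lg^?q * dt * S)))"
    using drift(2) ito(2) by (intro mult_left_mono add_mono order_refl) auto
  also have "\<dots> = gronwall_offset r T a x0 Af Ag + gronwall_rate r T Lf Lg * dt * S"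
    unfolding gronwall_offset_def gronwall_rate_def by (simp add: algebra_simps)
  finally show "expectation (majorant r n) \<le> gronwall_offset r T a x0 Af Ag + gronwall_rate r T Lf Lg * dt * S" .
qed

lemma integrable_X_power:
  assumes r: "r \<ge> 1"
  shows "n \<le> M \<Longrightarrow> integrable P (\<lambda>\<omega>. X n \<omega>^(2*r))"
proof (induction n rule: less_induct)
  case (less n)
  show ?case
  proof (rule integrable_dominated)
    show "integrable P (majorant r n)"
      using majorant_expectation_le(1)[OF less.prems r] less by simp
    show "(\<lambda>\<omega>. X n \<omega>^(2*r)) \<in> borel_measurable P"
      using X_measurable_P[OF less.prems] by (rule borel_measurable_power)
    fix \<omega> assume "\<omega> \<in> space P"
    then show "\<bar>X n \<omega>^(2*r)\<bar> \<le> majorant r n \<omega>"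
      unfolding X_def using xi_power_le_majorant[OF _ less.prems tk_nonneg order_refl r]
      by (simp add: zero_le_even_power)
  qed
qed

lemma X_moment_le:
  assumes r: "r \<ge> 1" and n: "n \<le> M"
  shows "expectation (\<lambda>\<omega>. X n \<omega>^(2*r))
    \<le> gronwall_offset r T a x0 Af Ag * exp (gronwall_rate r T Lf Lg * T)"
proof -
  let ?A = "gronwall_offset r T a x0 Af Ag" and ?B = "gronwall_rate r T Lf Lg"
  have A_nonneg: "0 \<le> ?A" and B_nonneg: "0 \<le> ?B"
    using T_pos Af Ag by (simp_all add: gronwall_offset_nonneg gronwall_rate_nonneg)
  have recursive: "expectation (\<lambda>\<omega>. X m \<omega>^(2*r)) \<le> ?A + ?B * dt * (\<Sum>k<m. expectation (\<lambda>\<omega>. X k \<omega>^(2*r)))"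
    if "m \<le> M" for m
  proof -
    have iX: "integrable P (\<lambda>\<omega>. X k \<omega>^(2*r))" if "k < m" for k
      using integrable_X_power[OF r] that \<open>m \<le> M\<close> by simp
    have "expectation (\<lambda>\<omega>. X m \<omega>^(2*r)) \<le> expectation (majorant r m)"
      using integrable_X_power[OF r that] majorant_expectation_le(1)[OF that r iX]
        xi_power_le_majorant[OF _ that tk_nonneg order_refl r]
      unfolding X_def by (intro integral_mono) auto
    then show ?thesis using majorant_expectation_le(2)[OF that r iX] by simp
  qed
  have "expectation (\<lambda>\<omega>. X n \<omega>^(2*r)) \<le> ?A * (1 + ?B * dt)^n"
    using A_nonneg B_nonneg dt_pos recursive n by (intro discrete_gronwall[of _ "?B * dt" M]) auto
  also have "\<dots> \<le> ?A * exp (?B * T)"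
    by (intro mult_left_mono one_add_power_le_exp B_nonneg A_nonneg n)
  finally show ?thesis .
qed

lemma sup_moment_le:
  assumes r: "r \<ge> 1" and p: "0 \<le> p" "p \<le> real (2*r)"
  shows "(\<integral>\<^sup>+\<omega>. (SUP t\<in>{0..T}. ennreal (\<bar>\<xi> t \<omega>\<bar> powr p)) \<partial>P) \<le> ennreal (moment_const r T a x0 Af Lf Ag Lg)"
proof -
  let ?A = "gronwall_offset r T a x0 Af Ag" and ?B = "gronwall_rate r T Lf Lg"
  have iX: "\<And>k. k < M \<Longrightarrow> integrable P (\<lambda>\<omega>. X k \<omega>^(2*r))" using integrable_X_power[OF r] by simp
  note majorant = majorant_expectation_le[OF order_refl r iX]
  have "(\<integral>\<^sup>+\<omega>. (SUP t\<in>{0..T}. ennreal (\<bar>\<xi> t \<omega>\<bar> powr p)) \<partial>P) \<le> (\<integral>\<^sup>+\<omega>. ennreal (1 + majorant r M \<omega>) \<partial>P)"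
  proof (intro nn_integral_mono SUP_least ennreal_leI)
    fix \<omega> t assume \<omega>: "\<omega> \<in> space P" and t: "t \<in> {0..T}"
    have "\<bar>\<xi> t \<omega>\<bar> powr p \<le> 1 + \<xi> t \<omega>^(2*r)" by (rule abs_powr_le_one_add_even_power[OF p])
    also have "\<xi> t \<omega>^(2*r) \<le> majorant r M \<omega>"
      using t tk_M by (intro xi_power_le_majorant[OF \<omega> order_refl _ _ r]) auto
    finally show "\<bar>\<xi> t \<omega>\<bar> powr p \<le> 1 + majorant r M \<omega>" by simp
  qed
  also have "\<dots> = ennreal (1 + expectation (majorant r M))"
    using majorant(1) majorant_nonneg
    by (subst nn_integral_eq_integral) (auto intro!: add_nonneg_nonneg simp: prob_space)
  also have "expectation (majorant r M) \<le> ?A + ?B * dt * (\<Sum>k<M. ?A * exp (?B * T))"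
  proof -
    have "?B * dt * (\<Sum>k<M. expectation (\<lambda>\<omega>. X k \<omega>^(2*r))) \<le> ?B * dt * (\<Sum>k<M. ?A * exp (?B * T))"
      using gronwall_rate_nonneg[of T r Lf Lg] T_pos dt_pos
      by (intro mult_left_mono sum_mono X_moment_le[OF r]) auto
    then show ?thesis using majorant(2) by linarith
  qed
  also have "?A + ?B * dt * (\<Sum>k<M. ?A * exp (?B * T)) = moment_const r T a x0 Af Lf Ag Lg - 1"
    using M_pos unfolding moment_const_def dt_def by (simp add: algebra_simps)
  finally show ?thesis by (simp add: ennreal_leI)
qed

end

lemma ABEP_values_in_closure:
  assumes "prob_space P" "ABEP P F B f g T M N a b x0 \<xi> U L"
  shows "prob_space.prob P {\<omega>\<in>space P. \<forall>t\<in>{0..T}. \<xi> t \<omega> \<in> closure (DN N a b)} = 1"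
proof -
  have "{\<omega>\<in>space P. \<forall>t\<in>{0..T}. \<xi> t \<omega> \<in> closure (DN N a b)} = space P"
    using assms(2) unfolding ABEP_def by auto
  then show ?thesis using prob_space.prob_space[OF assms(1)] by simp
qed

lemma ABEP_bounded_domain_moment:
  assumes "prob_space P" "ABEP P F B f g T M N a b x0 \<xi> U L" "b \<noteq> \<infinity>" "0 \<le> p"
  shows "(\<integral>\<^sup>+\<omega>. (SUP t\<in>{0..T}. ennreal (\<bar>\<xi> t \<omega>\<bar> powr p)) \<partial>P)
           \<le> ennreal (max (\<bar>a\<bar> powr p) (\<bar>real_of_ereal b\<bar> powr p))"
proof -
  let ?c = "max (\<bar>a\<bar> powr p) (\<bar>real_of_ereal b\<bar> powr p)"
  have "closure (DN N a b) \<subseteq> {a .. real_of_ereal b}"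
  proof (rule closure_minimal)
    show "DN N a b \<subseteq> {a .. real_of_ereal b}"
    proof
      fix x assume "x \<in> DN N a b"
      then obtain \<beta> where "b = ereal \<beta>" "a + 1 / real N < x" "x < \<beta> - 1 / real N"
        using assms(3) unfolding DN_def by (cases b) auto
      moreover have "0 \<le> 1 / real N" by simp
      ultimately have "a \<le> x" "x \<le> \<beta>" by linarith+
      then show "x \<in> {a .. real_of_ereal b}" using \<open>b = ereal \<beta>\<close> by simp
    qed
  qed simp
  moreover have "\<xi> t \<omega> \<in> closure (DN N a b)" if "\<omega> \<in> space P" "t \<in> {0..T}" for t \<omega>
    using assms(2) that unfolding ABEP_def by blast
  ultimately have bounds: "\<xi> t \<omega> \<in> {a .. real_of_ereal b}" if "\<omega> \<in> space P" "t \<in> {0..T}" for t \<omega>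
    using that by blast
  have pointwise: "\<bar>\<xi> t \<omega>\<bar> powr p \<le> ?c" if \<omega>: "\<omega> \<in> space P" and t: "t \<in> {0..T}" for t \<omega>
  proof -
    consider "\<bar>\<xi> t \<omega>\<bar> \<le> \<bar>a\<bar>" | "\<bar>\<xi> t \<omega>\<bar> \<le> \<bar>real_of_ereal b\<bar>"
      using bounds[OF \<omega> t] unfolding atLeastAtMost_iff by linarith
    then show ?thesis
    proof cases
      case 1
      then have "\<bar>\<xi> t \<omega>\<bar> powr p \<le> \<bar>a\<bar> powr p" using assms(4) by (intro powr_mono2) auto
      then show ?thesis by simp
    next
      case 2
      then have "\<bar>\<xi> t \<omega>\<bar> powr p \<le> \<bar>real_of_ereal b\<bar> powr p" using assms(4) by (intro powr_mono2) auto
      then show ?thesis by simp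
    qed
  qed
  have "(\<integral>\<^sup>+\<omega>. (SUP t\<in>{0..T}. ennreal (\<bar>\<xi> t \<omega>\<bar> powr p)) \<partial>P) \<le> (\<integral>\<^sup>+\<omega>. ennreal ?c \<partial>P)"
    by (intro nn_integral_mono SUP_least ennreal_leI pointwise)
  also have "\<dots> = ennreal ?c" using prob_space.emeasure_space_1[OF assms(1)] by simp
  finally show ?thesis .
qed

lemma lipschitz_on_linear_growth:
  fixes h :: "real \<Rightarrow> real"
  assumes h: "L-lipschitz_on S h" and "x0 \<in> S" "x \<in> S"
  shows "\<bar>h x\<bar> \<le> (\<bar>h x0\<bar> + L * \<bar>x0\<bar>) + L * \<bar>x\<bar>"
proof -
  have "dist (h x) (h x0) \<le> L * dist x x0" using lipschitz_onD[OF h] assms(2,3) by simp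
  also have "\<dots> \<le> L * (\<bar>x\<bar> + \<bar>x0\<bar>)"
    using lipschitz_on_nonneg[OF h] by (intro mult_left_mono) (auto simp: dist_real_def)
  finally show ?thesis unfolding dist_real_def by (simp add: algebra_simps)
qed

lemma ABEP_half_line_moment:
  fixes f g :: "real \<Rightarrow> real" and a x0 T p Lf Lg :: real
  assumes "T > 0"
    and Lf: "Lf-lipschitz_on (Dom a \<infinity>) f" and Lg: "Lg-lipschitz_on (Dom a \<infinity>) g"
    and x0: "x0 \<in> DN 1 a \<infinity>" and p: "p \<ge> 2"
  shows "\<exists>C::real. \<forall>(P::'w measure) F B (M::nat) (N::nat) \<xi> U L.
          brownian_motion P F B \<and> M \<ge> 1 \<and> N \<ge> 1 \<and> ABEP P F B f g T M N a \<infinity> x0 \<xi> U L \<longrightarrow>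
          (\<integral>\<^sup>+\<omega>. (SUP t\<in>{0..T}. ennreal (\<bar>\<xi> t \<omega>\<bar> powr p)) \<partial>P) \<le> ennreal C"
proof -
  define r where "r = nat \<lceil>p / 2\<rceil>"
  have r: "r \<ge> 1" "0 \<le> p" "p \<le> real (2*r)" unfolding r_def using p by linarith+
  define Af where "Af = \<bar>f x0\<bar> + Lf * \<bar>x0\<bar>"
  define Ag where "Ag = \<bar>g x0\<bar> + Lg * \<bar>x0\<bar>"
  have x0_Dom: "x0 \<in> Dom a \<infinity>" using x0 unfolding DN_def Dom_def by auto
  show ?thesis
  proof (intro exI allI impI)
    fix P :: "'w measure" and F B M N \<xi> U L
    assume H: "brownian_motion P F B \<and> M \<ge> 1 \<and> N \<ge> 1 \<and> ABEP P F B f g T M N a \<infinity> x0 \<xi> U L"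
    then have "0 < 1 / real N" by simp
    have half_line: "x \<in> Dom a \<infinity>" if "x \<ge> a + 1 / real N" for x
    proof -
      have "a < x" using that \<open>0 < 1 / real N\<close> by linarith
      then show ?thesis unfolding Dom_def by simp
    qed
    have "abep_half_line P F B f g T M N a x0 \<xi> U L Af Lf Ag Lg"
    proof unfold_locales
      show "continuous_on {a + 1 / real N..} f" "continuous_on {a + 1 / real N..} g"
        using lipschitz_on_continuous_on[OF Lf] lipschitz_on_continuous_on[OF Lg] half_line
        by (auto intro: continuous_on_subset)
      show "Af \<ge> 0" "Lf \<ge> 0" "Ag \<ge> 0" "Lg \<ge> 0"
        unfolding Af_def Ag_def using lipschitz_on_nonneg[OF Lf] lipschitz_on_nonneg[OF Lg] by auto
      show "\<bar>f x\<bar> \<le> Af + Lf * \<bar>x\<bar>" "\<bar>g x\<bar> \<le> Ag + Lg * \<bar>x\<bar>" if "x \<ge> a + 1 / real N" for x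
        unfolding Af_def Ag_def using x0_Dom half_line[OF that]
        by (auto intro: lipschitz_on_linear_growth[OF Lf] lipschitz_on_linear_growth[OF Lg])
    qed (use H \<open>T > 0\<close> in auto)
    then show "(\<integral>\<^sup>+\<omega>. (SUP t\<in>{0..T}. ennreal (\<bar>\<xi> t \<omega>\<bar> powr p)) \<partial>P)
        \<le> ennreal (moment_const r T a x0 Af Lf Ag Lg)"
      by (rule abep_half_line.sup_moment_le[OF _ r])
  qed
qed

text \<open>The hypotheses \<open>a < b\<close> and \<open>b - a > 2\<close> only make the domains \<open>D\<^sub>N\<close> nonempty;
  the bounds do not use them.\<close>

theorem theorem6p1:
  fixes f g :: "real \<Rightarrow> real" and a x0 T p Lf Lg :: real and b :: ereal
  assumes "T > 0"
    and "ereal a < b"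
    and "b \<noteq> \<infinity> \<longrightarrow> real_of_ereal b - a > 2"
    and "Lf-lipschitz_on (Dom a b) f"
    and "Lg-lipschitz_on (Dom a b) g"
    and "x0 \<in> DN 1 a b"
    and "p \<ge> 2"
  shows
    "(b = \<infinity> \<longrightarrow>
       (\<exists>C::real. \<forall>(P::'w measure) F B (M::nat) (N::nat) \<xi> U L.
          brownian_motion P F B \<and> M \<ge> 1 \<and> N \<ge> 1 \<and> ABEP P F B f g T M N a b x0 \<xi> U L \<longrightarrow>
          (\<integral>\<^sup>+\<omega>. (SUP t\<in>{0..T}. ennreal (\<bar>\<xi> t \<omega>\<bar> powr p)) \<partial>P) \<le> ennreal C)) \<and>
     (b \<noteq> \<infinity> \<longrightarrow>
       (\<forall>(P::'w measure) F B (M::nat) (N::nat) \<xi> U L.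
          brownian_motion P F B \<and> M \<ge> 1 \<and> N \<ge> 1 \<and> ABEP P F B f g T M N a b x0 \<xi> U L \<longrightarrow>
          (\<integral>\<^sup>+\<omega>. (SUP t\<in>{0..T}. ennreal (\<bar>\<xi> t \<omega>\<bar> powr p)) \<partial>P)
             \<le> ennreal (max (\<bar>a\<bar> powr p) (\<bar>real_of_ereal b\<bar> powr p)))) \<and>
     (\<forall>(P::'w measure) F B (M::nat) (N::nat) \<xi> U L.
          brownian_motion P F B \<and> M \<ge> 1 \<and> N \<ge> 1 \<and> ABEP P F B f g T M N a b x0 \<xi> U L \<longrightarrow>
          prob_space.prob P {\<omega>\<in>space P. \<forall>t\<in>{0..T}. \<xi> t \<omega> \<in> closure (DN N a b)} = 1)"
  apply (intro conjI impI allI)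
  subgoal using ABEP_half_line_moment[OF assms(1)] assms(4-7) by simp
  subgoal using assms(7) by (intro ABEP_bounded_domain_moment[OF brownian_motion_prob_space]) auto
  subgoal using ABEP_values_in_closure[OF brownian_motion_prob_space] by blast
  done

end
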